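(* Let $0\le d\le r\le\min\{m,n\}$. If the $\mathfrak{S}_n\times\mathfrak{S}_m$-irreducible $V^\lambda\otimes V^\mu$ occurs in $R(\mathcal{Z}_{n,m,r})_d$, then $\lambda_1\le n+m-d-r$ and $\mu_1\le n+m-d-r$.
   Context: Fix positive integers $n,m$. $\mathbb{C}[\mathbf{x}_{n\times m}]$ is the polynomial ring in variables $x_{i,j}$; $\mathfrak{S}_n\times\mathfrak{S}_m$ acts by $(g,h)\cdot x_{i,j}=x_{g(i),h(j)}$ (permuting rows and columns of matrices). For finite stable $\mathcal{Z}\subseteq\mathrm{Mat}_{n\times m}(\mathbb{C})$, $R(\mathcal{Z})=\mathbb{C}[\mathbf{x}_{n\times m}]/\mathrm{gr}\,\mathbf{I}(\mathcal{Z})$, where $\mathbf{I}(\mathcal{Z})$ is the vanishing ideal and $\mathrm{gr}$ takes the ideal generated by top-degree homogeneous components of nonzero elements; it is a graded $\mathfrak{S}_n\times\mathfrak{S}_m$-module with components $R(\mathcal{Z})_d$. $\mathcal{Z}_{n,m,r}$ is the set of $n\times m$ $0/1$ matrices with exactly $r$ ones and at most one $1$ in each row and each column (rook placements with $r$ rooks). $V^\lambda$ denotes the Specht module indexed by $\lambda$. *)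

theory Defs
  imports Complex_Main "HOL-Library.Poly_Mapping" "HOL-Combinatorics.Permutations"
begin

type_synonym mono = "(nat \<times> nat) \<Rightarrow>\<^sub>0 nat"
type_synonym cpoly = "mono \<Rightarrow>\<^sub>0 complex"

definition polys :: "nat \<Rightarrow> nat \<Rightarrow> cpoly set" where
  "polys n m = Collect (\<lambda>p::cpoly. \<forall>a\<in>Poly_Mapping.keys p. \<forall>v\<in>Poly_Mapping.keys a. fst v < n \<and> snd v < m)"

definition mdeg :: "mono \<Rightarrow> nat" where
  "mdeg a = (\<Sum>v\<in>Poly_Mapping.keys a. Poly_Mapping.lookup a v)"

definition peval :: "(nat \<Rightarrow> nat \<Rightarrow> complex) \<Rightarrow> cpoly \<Rightarrow> complex" where
  "peval A p = (\<Sum>a\<in>Poly_Mapping.keys p. Poly_Mapping.lookup p a * (\<Prod>v\<in>Poly_Mapping.keys a. A (fst v) (snd v) ^ Poly_Mapping.lookup a v))"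

definition smult :: "complex \<Rightarrow> cpoly \<Rightarrow> cpoly" where
  "smult c p = Poly_Mapping.map (\<lambda>x. c * x) p"

definition tdeg :: "cpoly \<Rightarrow> nat" where
  "tdeg p = Max (mdeg ` Poly_Mapping.keys p)"

definition top_comp :: "cpoly \<Rightarrow> cpoly" where
  "top_comp p = Abs_poly_mapping (\<lambda>a. if mdeg a = tdeg p then Poly_Mapping.lookup p a else 0)"

definition vanishing_ideal :: "nat \<Rightarrow> nat \<Rightarrow> (nat \<Rightarrow> nat \<Rightarrow> complex) set \<Rightarrow> cpoly set" where
  "vanishing_ideal n m Z = {p \<in> polys n m. \<forall>A\<in>Z. peval A p = 0}"

definition gen_ideal :: "nat \<Rightarrow> nat \<Rightarrow> cpoly set \<Rightarrow> cpoly set" where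
  "gen_ideal n m S = {q. \<exists>F c. finite F \<and> F \<subseteq> S \<and> (\<forall>g\<in>F. c g \<in> polys n m) \<and>
                             q = (\<Sum>g\<in>F. c g * g)}"

definition gr_ideal :: "nat \<Rightarrow> nat \<Rightarrow> cpoly set \<Rightarrow> cpoly set" where
  "gr_ideal n m I = gen_ideal n m {top_comp p | p. p \<in> I \<and> p \<noteq> 0}"

definition homog :: "nat \<Rightarrow> nat \<Rightarrow> nat \<Rightarrow> cpoly set" where
  "homog n m d = {p \<in> polys n m. \<forall>a\<in>Poly_Mapping.keys p. mdeg a = d}"

text \<open>action of (g,h) in S_n x S_m: x_(i,j) goes to x_(g i, h j)\<close>
definition mono_ren :: "(nat \<Rightarrow> nat) \<Rightarrow> (nat \<Rightarrow> nat) \<Rightarrow> mono \<Rightarrow> mono" where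
  "mono_ren g h b = Abs_poly_mapping (\<lambda>(i,j). Poly_Mapping.lookup b (g i, h j))"

definition pact :: "(nat \<Rightarrow> nat) \<Rightarrow> (nat \<Rightarrow> nat) \<Rightarrow> cpoly \<Rightarrow> cpoly" where
  "pact g h p = Abs_poly_mapping (\<lambda>b. Poly_Mapping.lookup p (mono_ren g h b))"

definition rook_placements :: "nat \<Rightarrow> nat \<Rightarrow> nat \<Rightarrow> (nat \<Rightarrow> nat \<Rightarrow> complex) set" where
  "rook_placements n m r = {A.
      (\<forall>i j. A i j \<in> {0, 1}) \<and> (\<forall>i j. (i \<ge> n \<or> j \<ge> m) \<longrightarrow> A i j = 0) \<and>
      card {(i,j). i < n \<and> j < m \<and> A i j = 1} = r \<and>
      (\<forall>i j j'. A i j = 1 \<and> A i j' = 1 \<longrightarrow> j = j') \<and>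
      (\<forall>i i' j. A i j = 1 \<and> A i' j = 1 \<longrightarrow> i = i')}"

definition is_partition :: "nat \<Rightarrow> nat list \<Rightarrow> bool" where
  "is_partition n la \<longleftrightarrow> (\<forall>x\<in>set la. 0 < x) \<and> sorted_wrt (\<ge>) la \<and> sum_list la = n"

definition young_diagram :: "nat list \<Rightarrow> (nat \<times> nat) set" where
  "young_diagram la = {(i,j). i < length la \<and> j < la ! i}"

definition tableau :: "nat \<Rightarrow> nat list \<Rightarrow> (nat \<times> nat \<Rightarrow> nat) \<Rightarrow> bool" where
  "tableau n la T \<longleftrightarrow> bij_betw T (young_diagram la) {..<n}"

definition cell_of :: "nat list \<Rightarrow> (nat \<times> nat \<Rightarrow> nat) \<Rightarrow> nat \<Rightarrow> nat \<times> nat" where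
  "cell_of la T = inv_into (young_diagram la) T"

text \<open>tabloids are encoded as row-assignment functions (entries >= n sent to row 0)\<close>
definition tabloid_of :: "nat \<Rightarrow> nat list \<Rightarrow> (nat \<times> nat \<Rightarrow> nat) \<Rightarrow> (nat \<Rightarrow> nat)" where
  "tabloid_of n la T = (\<lambda>i. if i < n then fst (cell_of la T i) else 0)"

definition col_group :: "nat \<Rightarrow> nat list \<Rightarrow> (nat \<times> nat \<Rightarrow> nat) \<Rightarrow> (nat \<Rightarrow> nat) set" where
  "col_group n la T = {p. p permutes {..<n} \<and>
       (\<forall>i<n. snd (cell_of la T (p i)) = snd (cell_of la T i))}"

text \<open>polytabloid e_T = sum over column stabilizer of sgn(p) {p T}, as an element of
  the permutation module M^la = functions from tabloids to C\<close>
definition polytabloid :: "nat \<Rightarrow> nat list \<Rightarrow> (nat \<times> nat \<Rightarrow> nat) \<Rightarrow> (nat \<Rightarrow> nat) \<Rightarrow> complex" where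
  "polytabloid n la T = (\<lambda>t. \<Sum>p\<in>col_group n la T.
       if t = tabloid_of n la T \<circ> inv p then of_int (sign p) else 0)"

definition cspan :: "('a \<Rightarrow> complex) set \<Rightarrow> ('a \<Rightarrow> complex) set" where
  "cspan S = {f. \<exists>F c. finite F \<and> F \<subseteq> S \<and> f = (\<lambda>x. \<Sum>g\<in>F. c g * g x)}"

text \<open>V^la (x) V^mu realized inside M^la (x) M^mu = functions on pairs of tabloids\<close>
definition specht_pair :: "nat \<Rightarrow> nat \<Rightarrow> nat list \<Rightarrow> nat list
     \<Rightarrow> ((nat \<Rightarrow> nat) \<times> (nat \<Rightarrow> nat) \<Rightarrow> complex) set" where
  "specht_pair n m la mu = cspan {(\<lambda>(t,u). polytabloid n la T t * polytabloid m mu U u) | T U.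
        tableau n la T \<and> tableau m mu U}"

definition wact :: "(nat \<Rightarrow> nat) \<Rightarrow> (nat \<Rightarrow> nat) \<Rightarrow> ((nat \<Rightarrow> nat) \<times> (nat \<Rightarrow> nat) \<Rightarrow> complex)
      \<Rightarrow> ((nat \<Rightarrow> nat) \<times> (nat \<Rightarrow> nat) \<Rightarrow> complex)" where
  "wact g h F = (\<lambda>(t,u). F (t \<circ> g, u \<circ> h))"

text \<open>R(Z)_d = homog d / (gr I(Z) intersected with homog d).  V^la (x) V^mu occurs in R(Z)_d
  iff there is an injective S_n x S_m-equivariant linear map V^la (x) V^mu -> R(Z)_d;
  such a map is given by a linear lift phi into the homogeneous degree-d polynomials,
  equivariant and injective modulo the degree-d part J of gr I(Z).\<close>
definition occurs_in_R :: "nat \<Rightarrow> nat \<Rightarrow> (nat \<Rightarrow> nat \<Rightarrow> complex) set \<Rightarrow> nat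
      \<Rightarrow> nat list \<Rightarrow> nat list \<Rightarrow> bool" where
  "occurs_in_R n m Z d la mu \<longleftrightarrow>
    (let W = specht_pair n m la mu;
         J = gr_ideal n m (vanishing_ideal n m Z) \<inter> homog n m d in
     \<exists>phi. (\<forall>w\<in>W. phi w \<in> homog n m d) \<and>
       (\<forall>x\<in>W. \<forall>y\<in>W. \<forall>a b. phi (\<lambda>z. a * x z + b * y z) = smult a (phi x) + smult b (phi y)) \<and>
       (\<forall>g h. g permutes {..<n} \<and> h permutes {..<m} \<longrightarrow>
          (\<forall>w\<in>W. phi (wact g h w) - pact g h (phi w) \<in> J)) \<and>
       (\<forall>w\<in>W. phi w \<in> J \<longrightarrow> w = (\<lambda>_. 0)))"

end

theory Submission
  imports Defs
begin

text \<open>Suppose la_1 > N = n + m - d - r and let S be N + 1 entries of the first row of a tableau T.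
  For every form f of degree d, the symmetrization of f over the permutations of S agrees on the
  rook placements Z with a polynomial of degree below d, so it lies in gr I(Z). Indeed, on 0/1
  matrices a symmetrized monomial factors into row-block sums over S; writing each as a full
  column sum minus the sum over the n - N - 1 rows outside S, every resulting term either has
  lower degree (on Z, a product of more than m - r column sums is a combination of shorter
  ones, as some of these columns holds a rook) or vanishes on Z (too few rows outside S to
  carry the rooks). The same symmetrizer does not kill the polytabloid of T, whose coefficient
  at the tabloid of T becomes the number of permutations of S, contradicting the injectivity of
  an equivariant lift of V^la (x) V^mu into R(Z)_d. The bound on mu_1 follows by transposing.\<close>

section \<open>Monomials and evaluation\<close>

definition mono_eval :: "(nat \<Rightarrow> nat \<Rightarrow> complex) \<Rightarrow> mono \<Rightarrow> complex" where
  "mono_eval A a = (\<Prod>v\<in>Poly_Mapping.keys a. A (fst v) (snd v) ^ Poly_Mapping.lookup a v)"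

definition mono_within :: "nat \<Rightarrow> nat \<Rightarrow> mono \<Rightarrow> bool" where
  "mono_within n m a \<longleftrightarrow> (\<forall>v\<in>Poly_Mapping.keys a. fst v < n \<and> snd v < m)"

lemma peval_eq_mono_eval: "peval A p = (\<Sum>a\<in>Poly_Mapping.keys p. Poly_Mapping.lookup p a * mono_eval A a)"
  unfolding peval_def mono_eval_def by simp

lemma peval_eq_sum_superset:
  assumes "finite X" "Poly_Mapping.keys p \<subseteq> X"
  shows "peval A p = (\<Sum>a\<in>X. Poly_Mapping.lookup p a * mono_eval A a)"
  unfolding peval_eq_mono_eval
  by (rule sum.mono_neutral_left[OF assms]) (auto simp: in_keys_iff)

lemma mono_eval_eq_prod_superset:
  assumes "finite V" "Poly_Mapping.keys a \<subseteq> V"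
  shows "mono_eval A a = (\<Prod>v\<in>V. A (fst v) (snd v) ^ Poly_Mapping.lookup a v)"
  unfolding mono_eval_def
  by (rule prod.mono_neutral_left[OF assms]) (auto simp: in_keys_iff)

lemma mdeg_eq_sum_superset:
  assumes "finite V" "Poly_Mapping.keys a \<subseteq> V"
  shows "mdeg a = (\<Sum>v\<in>V. Poly_Mapping.lookup a v)"
  unfolding mdeg_def
  by (rule sum.mono_neutral_left[OF assms]) (auto simp: in_keys_iff)

lemma keys_add_nat: "Poly_Mapping.keys (a + b) = Poly_Mapping.keys a \<union> Poly_Mapping.keys (b :: 'x \<Rightarrow>\<^sub>0 nat)"
  by (auto simp: in_keys_iff lookup_add)

lemma mdeg_zero [simp]: "mdeg 0 = 0"
  by (simp add: mdeg_def)

lemma mono_eval_zero [simp]: "mono_eval A 0 = 1"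
  by (simp add: mono_eval_def)

lemma mono_eval_add: "mono_eval A (a + b) = mono_eval A a * mono_eval A b"
proof -
  let ?V = "Poly_Mapping.keys a \<union> Poly_Mapping.keys b"
  have "finite ?V" by simp
  from mono_eval_eq_prod_superset[OF this] show ?thesis
    by (simp add: keys_add_nat lookup_add power_add prod.distrib)
qed

lemma mdeg_add: "mdeg (a + b) = mdeg a + mdeg b"
proof -
  let ?V = "Poly_Mapping.keys a \<union> Poly_Mapping.keys b"
  have "finite ?V" by simp
  from mdeg_eq_sum_superset[OF this] show ?thesis
    by (simp add: keys_add_nat lookup_add sum.distrib)
qed

lemma card_keys_le_mdeg: "card (Poly_Mapping.keys a) \<le> mdeg a"
proof -
  have "card (Poly_Mapping.keys a) = (\<Sum>v\<in>Poly_Mapping.keys a. 1)" by simp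
  also have "\<dots> \<le> mdeg a"
    unfolding mdeg_def by (rule sum_mono) (simp add: in_keys_iff Suc_le_eq)
  finally show ?thesis .
qed

lemma mono_eval_01:
  assumes "\<forall>v\<in>Poly_Mapping.keys a. A (fst v) (snd v) \<in> {0, 1}"
  shows "mono_eval A a = (\<Prod>v\<in>Poly_Mapping.keys a. A (fst v) (snd v))"
  unfolding mono_eval_def
proof (rule prod.cong[OF refl])
  fix v assume v: "v \<in> Poly_Mapping.keys a"
  then have "Poly_Mapping.lookup a v \<noteq> 0" by (simp add: in_keys_iff)
  with assms v show "A (fst v) (snd v) ^ Poly_Mapping.lookup a v = A (fst v) (snd v)"
    by (cases "Poly_Mapping.lookup a v") auto
qed

lemma peval_zero [simp]: "peval A 0 = 0"
  by (simp add: peval_def)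

lemma peval_add: "peval A (p + q) = peval A p + peval A q"
proof -
  let ?X = "Poly_Mapping.keys p \<union> Poly_Mapping.keys q"
  have "finite ?X" by simp
  from peval_eq_sum_superset[OF this] keys_add[of p q] show ?thesis
    by (simp add: lookup_add sum.distrib distrib_right)
qed

lemma peval_diff: "peval A (p - q) = peval A p - peval A q"
proof -
  let ?X = "Poly_Mapping.keys p \<union> Poly_Mapping.keys q"
  have "finite ?X" by simp
  from peval_eq_sum_superset[OF this] keys_diff[of p q] show ?thesis
    by (simp add: lookup_minus sum_subtractf left_diff_distrib)
qed

lemma peval_sum: "finite I \<Longrightarrow> peval A (\<Sum>i\<in>I. p i) = (\<Sum>i\<in>I. peval A (p i))"
  by (induction I rule: finite_induct) (auto simp: peval_add)

section \<open>Functions of low degree on a point set\<close>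

definition low_degree_on :: "(nat \<Rightarrow> nat \<Rightarrow> complex) set \<Rightarrow> nat \<Rightarrow> nat \<Rightarrow> nat
    \<Rightarrow> ((nat \<Rightarrow> nat \<Rightarrow> complex) \<Rightarrow> complex) \<Rightarrow> bool" where
  "low_degree_on Z n m k F \<longleftrightarrow> (\<exists>M c. finite M \<and> (\<forall>a\<in>M. mdeg a \<le> k \<and> mono_within n m a) \<and>
      (\<forall>A\<in>Z. F A = (\<Sum>a\<in>M. c a * mono_eval A a)))"

lemma low_degree_on_cong:
  "low_degree_on Z n m k F \<Longrightarrow> (\<And>A. A \<in> Z \<Longrightarrow> F A = G A) \<Longrightarrow> low_degree_on Z n m k G"
  unfolding low_degree_on_def by metis

lemma low_degree_on_mono: "low_degree_on Z n m k F \<Longrightarrow> k \<le> k' \<Longrightarrow> low_degree_on Z n m k' F"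
  unfolding low_degree_on_def by (meson order_trans)

lemma low_degree_on_const: "low_degree_on Z n m k (\<lambda>A. c)"
  unfolding low_degree_on_def
  by (intro exI[of _ "{0}"] exI[of _ "\<lambda>_. c"]) (simp add: mono_within_def)

lemma low_degree_on_zero_on:
  "(\<And>A. A \<in> Z \<Longrightarrow> F A = 0) \<Longrightarrow> low_degree_on Z n m k F"
  by (rule low_degree_on_cong[OF low_degree_on_const[of Z n m k 0]]) simp

lemma low_degree_on_entry: "i < n \<Longrightarrow> j < m \<Longrightarrow> low_degree_on Z n m 1 (\<lambda>A. A i j)"
  unfolding low_degree_on_def
  by (intro exI[of _ "{Poly_Mapping.single (i,j) 1}"] exI[of _ "\<lambda>_. 1"])
     (simp add: mono_within_def mdeg_def mono_eval_def)

lemma low_degree_on_scale: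
  assumes "low_degree_on Z n m k F"
  shows "low_degree_on Z n m k (\<lambda>A. s * F A)"
proof -
  obtain M c where "finite M" "\<forall>a\<in>M. mdeg a \<le> k \<and> mono_within n m a"
      "\<forall>A\<in>Z. F A = (\<Sum>a\<in>M. c a * mono_eval A a)"
    using assms unfolding low_degree_on_def by blast
  then show ?thesis
    unfolding low_degree_on_def
    by (intro exI[of _ M] exI[of _ "\<lambda>a. s * c a"]) (simp add: sum_distrib_left mult.assoc)
qed

lemma low_degree_on_add:
  assumes "low_degree_on Z n m k F" "low_degree_on Z n m k G"
  shows "low_degree_on Z n m k (\<lambda>A. F A + G A)"
proof -
  obtain M1 c1 where h1: "finite M1" "\<forall>a\<in>M1. mdeg a \<le> k \<and> mono_within n m a"
      "\<forall>A\<in>Z. F A = (\<Sum>a\<in>M1. c1 a * mono_eval A a)"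
    using assms(1) unfolding low_degree_on_def by blast
  obtain M2 c2 where h2: "finite M2" "\<forall>a\<in>M2. mdeg a \<le> k \<and> mono_within n m a"
      "\<forall>A\<in>Z. G A = (\<Sum>a\<in>M2. c2 a * mono_eval A a)"
    using assms(2) unfolding low_degree_on_def by blast
  let ?c = "\<lambda>a. (if a \<in> M1 then c1 a else 0) + (if a \<in> M2 then c2 a else 0)"
  have "F A + G A = (\<Sum>a\<in>M1\<union>M2. ?c a * mono_eval A a)" if "A \<in> Z" for A
  proof -
    have "(\<Sum>a\<in>M1\<union>M2. (if a \<in> M1 then c1 a else 0) * mono_eval A a) = (\<Sum>a\<in>M1. c1 a * mono_eval A a)"
      "(\<Sum>a\<in>M1\<union>M2. (if a \<in> M2 then c2 a else 0) * mono_eval A a) = (\<Sum>a\<in>M2. c2 a * mono_eval A a)"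
      using h1(1) h2(1) by (intro sum.mono_neutral_cong_right; auto)+
    with h1(3) h2(3) that show ?thesis by (simp add: distrib_right sum.distrib)
  qed
  with h1 h2 show ?thesis
    unfolding low_degree_on_def by (intro exI[of _ "M1 \<union> M2"] exI[of _ ?c]) auto
qed

lemma low_degree_on_sum:
  "finite I \<Longrightarrow> (\<And>i. i \<in> I \<Longrightarrow> low_degree_on Z n m k (F i))
     \<Longrightarrow> low_degree_on Z n m k (\<lambda>A. \<Sum>i\<in>I. F i A)"
proof (induction I rule: finite_induct)
  case empty
  show ?case using low_degree_on_const[of Z n m k 0] by simp
next
  case (insert x I)
  then show ?case using low_degree_on_add[of Z n m k "F x" "\<lambda>A. \<Sum>i\<in>I. F i A"] by simp
qed

lemma low_degree_on_mult:
  assumes "low_degree_on Z n m k F" "low_degree_on Z n m l G"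
  shows "low_degree_on Z n m (k + l) (\<lambda>A. F A * G A)"
proof -
  obtain M1 c1 where h1: "finite M1" "\<forall>a\<in>M1. mdeg a \<le> k \<and> mono_within n m a"
      "\<forall>A\<in>Z. F A = (\<Sum>a\<in>M1. c1 a * mono_eval A a)"
    using assms(1) unfolding low_degree_on_def by blast
  obtain M2 c2 where h2: "finite M2" "\<forall>a\<in>M2. mdeg a \<le> l \<and> mono_within n m a"
      "\<forall>A\<in>Z. G A = (\<Sum>a\<in>M2. c2 a * mono_eval A a)"
    using assms(2) unfolding low_degree_on_def by blast
  let ?h = "\<lambda>(a::mono, b). a + b"
  let ?c = "\<lambda>e. \<Sum>x\<in>{x\<in>M1\<times>M2. ?h x = e}. c1 (fst x) * c2 (snd x)"
  have fin: "finite (M1 \<times> M2)" using h1(1) h2(1) by simp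
  have "F A * G A = (\<Sum>e\<in>?h ` (M1 \<times> M2). ?c e * mono_eval A e)" if "A \<in> Z" for A
  proof -
    have "F A * G A = (\<Sum>a\<in>M1. \<Sum>b\<in>M2. (c1 a * mono_eval A a) * (c2 b * mono_eval A b))"
      using h1(3) h2(3) that by (simp add: sum_product)
    also have "\<dots> = (\<Sum>x\<in>M1\<times>M2. c1 (fst x) * c2 (snd x) * mono_eval A (?h x))"
      by (simp add: sum.cartesian_product case_prod_beta mono_eval_add mult_ac)
    also have "\<dots> = (\<Sum>e\<in>?h ` (M1 \<times> M2). \<Sum>x\<in>{x\<in>M1\<times>M2. ?h x = e}. c1 (fst x) * c2 (snd x) * mono_eval A (?h x))"
      by (rule sum.image_gen[OF fin])
    also have "\<dots> = (\<Sum>e\<in>?h ` (M1 \<times> M2). ?c e * mono_eval A e)"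
      by (intro sum.cong refl) (simp add: sum_distrib_right)
    finally show ?thesis .
  qed
  moreover have "\<forall>e\<in>?h ` (M1 \<times> M2). mdeg e \<le> k + l \<and> mono_within n m e"
    using h1(2) h2(2) keys_add_nat by (fastforce simp: mdeg_add mono_within_def)
  ultimately show ?thesis
    unfolding low_degree_on_def using fin by (intro exI[of _ "?h ` (M1 \<times> M2)"] exI[of _ ?c]) auto
qed

lemma low_degree_on_prod:
  "finite I \<Longrightarrow> (\<And>i. i \<in> I \<Longrightarrow> low_degree_on Z n m (k i) (F i))
     \<Longrightarrow> low_degree_on Z n m (\<Sum>i\<in>I. k i) (\<lambda>A. \<Prod>i\<in>I. F i A)"
proof (induction I rule: finite_induct)
  case empty
  show ?case using low_degree_on_const[of Z n m 0 1] by simp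
next
  case (insert x I)
  then show ?case
    using low_degree_on_mult[of Z n m "k x" "F x" "\<Sum>i\<in>I. k i" "\<lambda>A. \<Prod>i\<in>I. F i A"] by simp
qed

lemma low_degree_on_prod_entries:
  assumes "finite K" "\<And>v. v \<in> K \<Longrightarrow> row v < n \<and> col v < m"
  shows "low_degree_on Z n m (card K) (\<lambda>A. \<Prod>v\<in>K. A (row v) (col v))"
  using low_degree_on_prod[OF assms(1), of Z n m "\<lambda>_. 1"] assms(2) low_degree_on_entry by simp

lemma low_degree_on_sum_entries:
  "j < m \<Longrightarrow> I \<subseteq> {..<n} \<Longrightarrow> low_degree_on Z n m 1 (\<lambda>A. \<Sum>i\<in>I. A i j)"
  using low_degree_on_sum[of I Z n m 1 "\<lambda>i A. A i j"] low_degree_on_entry[of _ n j m Z]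
  by (auto intro: finite_subset)

section \<open>The associated graded ideal\<close>

lemma polys_zero [simp]: "0 \<in> polys n m"
  by (simp add: polys_def)

lemma polys_add: "p \<in> polys n m \<Longrightarrow> q \<in> polys n m \<Longrightarrow> p + q \<in> polys n m"
  unfolding polys_def using keys_add[of p q] by blast

lemma polys_diff: "p \<in> polys n m \<Longrightarrow> q \<in> polys n m \<Longrightarrow> p - q \<in> polys n m"
  unfolding polys_def using keys_diff[of p q] by blast

lemma homog_zero: "0 \<in> homog n m d"
  by (simp add: homog_def)

lemma homog_add: "p \<in> homog n m d \<Longrightarrow> q \<in> homog n m d \<Longrightarrow> p + q \<in> homog n m d"
  unfolding homog_def using keys_add[of p q] polys_add by blast

lemma homog_sum:
  "finite I \<Longrightarrow> (\<And>i. i \<in> I \<Longrightarrow> p i \<in> homog n m d) \<Longrightarrow> (\<Sum>i\<in>I. p i) \<in> homog n m d"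
  by (induction I rule: finite_induct) (simp_all add: homog_add homog_zero)

lemma gen_ideal_add:
  assumes "x \<in> gen_ideal n m S" "y \<in> gen_ideal n m S"
  shows "x + y \<in> gen_ideal n m S"
proof -
  obtain F1 c1 where h1: "finite F1" "F1 \<subseteq> S" "\<forall>g\<in>F1. c1 g \<in> polys n m" "x = (\<Sum>g\<in>F1. c1 g * g)"
    using assms(1) unfolding gen_ideal_def by blast
  obtain F2 c2 where h2: "finite F2" "F2 \<subseteq> S" "\<forall>g\<in>F2. c2 g \<in> polys n m" "y = (\<Sum>g\<in>F2. c2 g * g)"
    using assms(2) unfolding gen_ideal_def by blast
  let ?c = "\<lambda>g. (if g \<in> F1 then c1 g else 0) + (if g \<in> F2 then c2 g else 0)"
  have "(\<Sum>g\<in>F1\<union>F2. (if g \<in> F1 then c1 g else 0) * g) = x"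
    "(\<Sum>g\<in>F1\<union>F2. (if g \<in> F2 then c2 g else 0) * g) = y"
    unfolding h1(4) h2(4) using h1(1) h2(1) by (intro sum.mono_neutral_cong_right; auto)+
  then have "x + y = (\<Sum>g\<in>F1\<union>F2. ?c g * g)"
    by (simp add: distrib_right sum.distrib)
  moreover have "\<forall>g\<in>F1\<union>F2. ?c g \<in> polys n m"
    using h1(3) h2(3) by (auto intro: polys_add)
  ultimately show ?thesis
    unfolding gen_ideal_def using h1 h2 by (intro CollectI exI[of _ "F1 \<union> F2"] exI[of _ ?c]) auto
qed

definition gr_homog_part :: "nat \<Rightarrow> nat \<Rightarrow> (nat \<Rightarrow> nat \<Rightarrow> complex) set \<Rightarrow> nat \<Rightarrow> cpoly set" where
  "gr_homog_part n m Z d = gr_ideal n m (vanishing_ideal n m Z) \<inter> homog n m d"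

lemma gr_homog_part_zero [simp]: "0 \<in> gr_homog_part n m Z d"
  unfolding gr_homog_part_def gr_ideal_def gen_ideal_def
  by (auto intro!: exI[of _ "{}"] homog_zero)

lemma gr_homog_part_add:
  "p \<in> gr_homog_part n m Z d \<Longrightarrow> q \<in> gr_homog_part n m Z d \<Longrightarrow> p + q \<in> gr_homog_part n m Z d"
  unfolding gr_homog_part_def gr_ideal_def by (auto intro: gen_ideal_add homog_add)

lemma gr_homog_part_sum:
  "finite I \<Longrightarrow> (\<And>i. i \<in> I \<Longrightarrow> p i \<in> gr_homog_part n m Z d) \<Longrightarrow> (\<Sum>i\<in>I. p i) \<in> gr_homog_part n m Z d"
  by (induction I rule: finite_induct) (simp_all add: gr_homog_part_add)

text \<open>If p agrees on Z with some q of lower degree, then p - q lies in the vanishing ideal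
  and has top component p.\<close>

lemma gr_homog_part_if_low_degree_on:
  assumes p: "p \<in> homog n m d" and d: "1 \<le> d"
    and low: "low_degree_on Z n m (d - 1) (\<lambda>A. peval A p)"
  shows "p \<in> gr_homog_part n m Z d"
proof (cases "p = 0")
  case True then show ?thesis by simp
next
  case False
  obtain M c where M: "finite M" "\<forall>a\<in>M. mdeg a \<le> d - 1 \<and> mono_within n m a"
      "\<forall>A\<in>Z. peval A p = (\<Sum>a\<in>M. c a * mono_eval A a)"
    using low unfolding low_degree_on_def by blast
  define q where "q = Abs_poly_mapping (\<lambda>a. if a \<in> M then c a else 0)"
  have lookup_q: "Poly_Mapping.lookup q = (\<lambda>a. if a \<in> M then c a else 0)"
    unfolding q_def using M(1) by (subst lookup_Abs_poly_mapping) (auto elim: finite_subset[rotated])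
  have keys_q: "Poly_Mapping.keys q \<subseteq> M"
    by (auto simp: in_keys_iff lookup_q split: if_splits)
  have "q \<in> polys n m" using keys_q M(2) by (auto simp: polys_def mono_within_def)
  moreover have p_polys: "p \<in> polys n m" and deg_p: "\<forall>a\<in>Poly_Mapping.keys p. mdeg a = d"
    using p by (auto simp: homog_def)
  moreover have "peval A q = peval A p" if "A \<in> Z" for A
    using peval_eq_sum_superset[OF M(1) keys_q, of A] M(3) that by (simp add: lookup_q)
  ultimately have van: "p - q \<in> vanishing_ideal n m Z"
    by (simp add: vanishing_ideal_def peval_diff polys_diff)
  have not_M: "mdeg a = d \<Longrightarrow> a \<notin> M" for a using M(2) d by fastforce
  have lookup_pq: "Poly_Mapping.lookup (p - q) a =
      (if mdeg a = d then Poly_Mapping.lookup p a else if a \<in> M then - c a else 0)" for a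
    using not_M[of a] deg_p by (auto simp: lookup_minus lookup_q in_keys_iff)
  obtain a0 where a0: "a0 \<in> Poly_Mapping.keys p" using False by fastforce
  have tdeg_pq: "tdeg (p - q) = d"
    unfolding tdeg_def
  proof (rule Max_eqI)
    show "y \<le> d" if "y \<in> mdeg ` Poly_Mapping.keys (p - q)" for y
      using that keys_diff[of p q] keys_q deg_p M(2) by fastforce
    show "d \<in> mdeg ` Poly_Mapping.keys (p - q)"
      using a0 deg_p lookup_pq[of a0] by (auto simp: in_keys_iff intro!: image_eqI[of _ _ a0])
  qed simp
  have "(\<lambda>a. if mdeg a = tdeg (p - q) then Poly_Mapping.lookup (p - q) a else 0) = Poly_Mapping.lookup p"
    using deg_p by (auto simp: tdeg_pq lookup_pq in_keys_iff fun_eq_iff)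
  then have "top_comp (p - q) = p"
    by (simp add: top_comp_def)
  moreover have "p - q \<noteq> 0"
    using a0 deg_p lookup_pq[of a0] by (auto simp: in_keys_iff)
  ultimately have "p \<in> gen_ideal n m {top_comp p | p. p \<in> vanishing_ideal n m Z \<and> p \<noteq> 0}"
    unfolding gen_ideal_def using van
    by (intro CollectI exI[of _ "{p}"] exI[of _ "\<lambda>_. 1"]) (auto simp: polys_def intro!: exI[of _ "p - q"])
  with p show ?thesis by (simp add: gr_homog_part_def gr_ideal_def)
qed

section \<open>Permuting rows and columns\<close>

lemma bij_betw_pair_map_vimage:
  assumes "bij g" "bij h"
  shows "bij_betw (\<lambda>(i, j). (g i, h j)) ((\<lambda>(i, j). (g i, h j)) -` X) X"
proof -
  let ?f = "\<lambda>(i, j). (g i, h j)"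
  have "inj ?f" using assms by (auto simp: inj_def bij_def split: prod.splits)
  then have "inj_on ?f (?f -` X)" by (rule inj_on_subset) simp
  have "surj ?f" using assms by (auto simp: bij_def surj_def split: prod.splits)
  then have "?f ` (?f -` X) = X" by (rule surj_image_vimage_eq)
  with \<open>inj_on ?f (?f -` X)\<close> show ?thesis by (rule bij_betw_imageI)
qed

lemma lookup_mono_ren:
  assumes "bij g" "bij h"
  shows "Poly_Mapping.lookup (mono_ren g h b) = (\<lambda>(i, j). Poly_Mapping.lookup b (g i, h j))"
proof -
  have "{x. (\<lambda>(i, j). Poly_Mapping.lookup b (g i, h j)) x \<noteq> 0}
      = (\<lambda>(i, j). (g i, h j)) -` Poly_Mapping.keys b"
    by (auto simp: in_keys_iff)
  moreover have "finite ((\<lambda>(i, j). (g i, h j)) -` Poly_Mapping.keys b)"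
    by (simp add: bij_betw_finite[OF bij_betw_pair_map_vimage[OF assms]])
  ultimately show ?thesis unfolding mono_ren_def by simp
qed

lemma keys_mono_ren:
  assumes "bij g" "bij h"
  shows "Poly_Mapping.keys (mono_ren g h b) = (\<lambda>(i, j). (g i, h j)) -` Poly_Mapping.keys b"
  by (auto simp: in_keys_iff lookup_mono_ren[OF assms])

lemma mono_ren_inv:
  assumes "bij g" "bij h"
  shows "mono_ren g h (mono_ren (inv g) (inv h) a) = a"
proof -
  have bij_inv: "bij (inv g)" "bij (inv h)" using assms by (auto simp: bij_imp_bij_inv)
  show ?thesis
    by (rule poly_mapping_eqI)
       (simp add: lookup_mono_ren[OF assms] lookup_mono_ren[OF bij_inv] split_beta
         bij_inv_eq_iff[OF assms(1)] bij_inv_eq_iff[OF assms(2)] inv_f_f bij_is_inj assms)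
qed

lemma mono_ren_inv':
  assumes "bij g" "bij h"
  shows "mono_ren (inv g) (inv h) (mono_ren g h a) = a"
proof -
  have "bij (inv g)" "bij (inv h)" using assms by (auto simp: bij_imp_bij_inv)
  from mono_ren_inv[OF this, of a] show ?thesis
    by (simp add: inv_inv_eq[OF assms(1)] inv_inv_eq[OF assms(2)])
qed

lemma mono_eval_mono_ren:
  assumes "bij g" "bij h"
  shows "mono_eval A (mono_ren g h b) = mono_eval (\<lambda>i j. A (inv g i) (inv h j)) b"
proof -
  let ?f = "\<lambda>(i, j). (g i, h j)"
  let ?F = "\<lambda>w. A (inv g (fst w)) (inv h (snd w)) ^ Poly_Mapping.lookup b w"
  have "mono_eval A (mono_ren g h b) = (\<Prod>v\<in>?f -` Poly_Mapping.keys b. ?F (?f v))"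
    unfolding mono_eval_def keys_mono_ren[OF assms] lookup_mono_ren[OF assms]
    using assms by (simp add: split_beta inv_f_f bij_is_inj)
  also have "\<dots> = (\<Prod>w\<in>Poly_Mapping.keys b. ?F w)"
    by (rule prod.reindex_bij_betw[OF bij_betw_pair_map_vimage[OF assms], where g = ?F])
  finally show ?thesis by (simp add: mono_eval_def)
qed

lemma mdeg_mono_ren:
  assumes "bij g" "bij h"
  shows "mdeg (mono_ren g h b) = mdeg b"
proof -
  let ?f = "\<lambda>(i, j). (g i, h j)"
  have "mdeg (mono_ren g h b) = (\<Sum>v\<in>?f -` Poly_Mapping.keys b. Poly_Mapping.lookup b (?f v))"
    unfolding mdeg_def keys_mono_ren[OF assms] lookup_mono_ren[OF assms] by (simp add: split_beta)
  also have "\<dots> = mdeg b"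
    unfolding mdeg_def by (rule sum.reindex_bij_betw[OF bij_betw_pair_map_vimage[OF assms]])
  finally show ?thesis .
qed

lemma inj_mono_ren:
  assumes "bij g" "bij h"
  shows "inj (mono_ren g h)"
  by (rule inj_on_inverseI[where g = "mono_ren (inv g) (inv h)"]) (rule mono_ren_inv'[OF assms])

lemma lookup_pact:
  assumes "bij g" "bij h"
  shows "Poly_Mapping.lookup (pact g h p) = (\<lambda>b. Poly_Mapping.lookup p (mono_ren g h b))"
proof -
  have "{b. Poly_Mapping.lookup p (mono_ren g h b) \<noteq> 0} = mono_ren g h -` Poly_Mapping.keys p"
    by (auto simp: in_keys_iff)
  moreover have "finite (mono_ren g h -` Poly_Mapping.keys p)"
    by (rule finite_vimageI[OF finite_keys inj_mono_ren[OF assms]])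
  ultimately show ?thesis unfolding pact_def by simp
qed

lemma keys_pact:
  assumes "bij g" "bij h"
  shows "Poly_Mapping.keys (pact g h p) = mono_ren (inv g) (inv h) ` Poly_Mapping.keys p"
proof -
  have keys_iff: "x \<in> Poly_Mapping.keys (pact g h p) \<longleftrightarrow> mono_ren g h x \<in> Poly_Mapping.keys p" for x
    by (simp add: in_keys_iff lookup_pact[OF assms])
  show ?thesis
  proof (intro set_eqI iffI)
    fix x assume "x \<in> Poly_Mapping.keys (pact g h p)"
    then have "mono_ren g h x \<in> Poly_Mapping.keys p" by (simp add: keys_iff)
    moreover have "x = mono_ren (inv g) (inv h) (mono_ren g h x)"
      by (simp add: mono_ren_inv'[OF assms])
    ultimately show "x \<in> mono_ren (inv g) (inv h) ` Poly_Mapping.keys p" by blast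
  next
    fix x assume "x \<in> mono_ren (inv g) (inv h) ` Poly_Mapping.keys p"
    then obtain a where "a \<in> Poly_Mapping.keys p" "x = mono_ren (inv g) (inv h) a" by blast
    then show "x \<in> Poly_Mapping.keys (pact g h p)"
      by (simp add: keys_iff mono_ren_inv[OF assms])
  qed
qed

lemma peval_pact:
  assumes "bij g" "bij h"
  shows "peval A (pact g h p) = peval (\<lambda>i j. A (g i) (h j)) p"
proof -
  have bij_inv: "bij (inv g)" "bij (inv h)" using assms by (auto simp: bij_imp_bij_inv)
  have inj: "inj_on (mono_ren (inv g) (inv h)) (Poly_Mapping.keys p)"
    by (rule inj_on_inverseI[where g = "mono_ren g h"]) (rule mono_ren_inv[OF assms])
  have "peval A (pact g h p)
      = (\<Sum>a\<in>Poly_Mapping.keys p. Poly_Mapping.lookup p a * mono_eval A (mono_ren (inv g) (inv h) a))"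
    unfolding peval_eq_mono_eval keys_pact[OF assms] lookup_pact[OF assms]
    by (subst sum.reindex[OF inj]) (simp add: mono_ren_inv[OF assms])
  also have "\<dots> = peval (\<lambda>i j. A (g i) (h j)) p"
    unfolding peval_eq_mono_eval using assms by (simp add: mono_eval_mono_ren[OF bij_inv] inv_inv_eq)
  finally show ?thesis .
qed

lemma pact_homog:
  assumes g: "g permutes {..<n}" and h: "h permutes {..<m}" and p: "p \<in> homog n m d"
  shows "pact g h p \<in> homog n m d"
proof -
  have bij: "bij g" "bij h" using g h permutes_bij by blast+
  have bij_inv: "bij (inv g)" "bij (inv h)" using bij by (auto simp: bij_imp_bij_inv)
  have "mdeg b = d \<and> (\<forall>v\<in>Poly_Mapping.keys b. fst v < n \<and> snd v < m)"
    if b: "b \<in> Poly_Mapping.keys (pact g h p)" for b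
  proof -
    obtain a where a: "a \<in> Poly_Mapping.keys p" "b = mono_ren (inv g) (inv h) a"
      using b unfolding keys_pact[OF bij] by blast
    have "v \<in> Poly_Mapping.keys b \<Longrightarrow> (inv g (fst v), inv h (snd v)) \<in> Poly_Mapping.keys a" for v
      using a(2) by (auto simp: keys_mono_ren[OF bij_inv] split_beta)
    moreover have "i < n" if "inv g i < n" for i
      using g that by (metis lessThan_iff permutes_inverses(1) permutes_in_image)
    moreover have "j < m" if "inv h j < m" for j
      using h that by (metis lessThan_iff permutes_inverses(1) permutes_in_image)
    ultimately show ?thesis
      using a p by (fastforce simp: homog_def polys_def mdeg_mono_ren[OF bij_inv])
  qed
  then show ?thesis by (simp add: homog_def polys_def)
qed

lemma sum_pact_in_gr_homog_part:
  assumes I: "finite I" and perm: "\<And>i. i \<in> I \<Longrightarrow> g i permutes {..<n} \<and> h i permutes {..<m}"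
    and d: "1 \<le> d" and f: "f \<in> homog n m d"
    and low: "\<And>a. mono_within n m a \<Longrightarrow> mdeg a = d \<Longrightarrow>
       low_degree_on Z n m (d - 1) (\<lambda>A. \<Sum>i\<in>I. mono_eval (\<lambda>x y. A (g i x) (h i y)) a)"
  shows "(\<Sum>i\<in>I. pact (g i) (h i) f) \<in> gr_homog_part n m Z d"
proof (rule gr_homog_part_if_low_degree_on[OF _ d])
  show "(\<Sum>i\<in>I. pact (g i) (h i) f) \<in> homog n m d"
    using perm pact_homog[OF _ _ f] by (intro homog_sum[OF I]) blast
  have "peval A (\<Sum>i\<in>I. pact (g i) (h i) f) = (\<Sum>a\<in>Poly_Mapping.keys f.
      Poly_Mapping.lookup f a * (\<Sum>i\<in>I. mono_eval (\<lambda>x y. A (g i x) (h i y)) a))" for A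
  proof -
    have "peval A (pact (g i) (h i) f) = peval (\<lambda>x y. A (g i x) (h i y)) f" if "i \<in> I" for i
      using perm[OF that] by (intro peval_pact) (auto dest: permutes_bij)
    then have "peval A (\<Sum>i\<in>I. pact (g i) (h i) f) = (\<Sum>i\<in>I. peval (\<lambda>x y. A (g i x) (h i y)) f)"
      by (simp add: peval_sum[OF I])
    also have "\<dots> = (\<Sum>i\<in>I. \<Sum>a\<in>Poly_Mapping.keys f.
        Poly_Mapping.lookup f a * mono_eval (\<lambda>x y. A (g i x) (h i y)) a)"
      by (simp add: peval_eq_mono_eval)
    also have "\<dots> = (\<Sum>a\<in>Poly_Mapping.keys f.
        Poly_Mapping.lookup f a * (\<Sum>i\<in>I. mono_eval (\<lambda>x y. A (g i x) (h i y)) a))"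
      by (subst sum.swap) (simp add: sum_distrib_left)
    finally show ?thesis .
  qed
  moreover have "low_degree_on Z n m (d - 1) (\<lambda>A. \<Sum>a\<in>Poly_Mapping.keys f.
      Poly_Mapping.lookup f a * (\<Sum>i\<in>I. mono_eval (\<lambda>x y. A (g i x) (h i y)) a))"
  proof (rule low_degree_on_sum[OF finite_keys])
    fix a assume "a \<in> Poly_Mapping.keys f"
    with f have "mono_within n m a" "mdeg a = d" by (auto simp: homog_def polys_def mono_within_def)
    then show "low_degree_on Z n m (d - 1) (\<lambda>A. Poly_Mapping.lookup f a *
        (\<Sum>i\<in>I. mono_eval (\<lambda>x y. A (g i x) (h i y)) a))"
      by (intro low_degree_on_scale low)
  qed
  ultimately show "low_degree_on Z n m (d - 1) (\<lambda>A. peval A (\<Sum>i\<in>I. pact (g i) (h i) f))"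
    by simp
qed

section \<open>Symmetrized monomials on rook placements\<close>

lemma rook_placementsD:
  assumes "A \<in> rook_placements n m r"
  shows "A i j = 0 \<or> A i j = 1" "n \<le> i \<Longrightarrow> A i j = 0" "m \<le> j \<Longrightarrow> A i j = 0"
    "card {(i, j). i < n \<and> j < m \<and> A i j = 1} = r"
    "A i j = 1 \<Longrightarrow> A i j' = 1 \<Longrightarrow> j = j'" "A i j = 1 \<Longrightarrow> A i' j = 1 \<Longrightarrow> i = i'"
  using assms unfolding rook_placements_def by blast+

lemma rook_column_sum:
  assumes A: "A \<in> rook_placements n m r" and S: "finite S" "i \<in> S" and rook: "A i j = 1"
  shows "(\<Sum>i'\<in>S. A i' j) = 1"
proof -
  have "(\<Sum>i'\<in>S. A i' j) = (\<Sum>i'\<in>S. if i' = i then 1 else 0)"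
    using rook_placementsD(1,6)[OF A] rook by (intro sum.cong refl) metis
  with S show ?thesis by simp
qed

lemma rook_in_columns:
  assumes A: "A \<in> rook_placements n m r" and L: "L \<subseteq> {..<m}" "m - r < card L"
  shows "\<exists>j\<in>L. \<exists>i<n. A i j = 1"
proof (rule ccontr)
  assume no_rook: "\<not> ?thesis"
  let ?R = "{(i, j). i < n \<and> j < m \<and> A i j = 1}"
  have "inj_on snd ?R" using rook_placementsD(6)[OF A] by (auto simp: inj_on_def)
  then have "r = card (snd ` ?R)" using rook_placementsD(4)[OF A] by (simp add: card_image)
  also have "\<dots> \<le> card ({..<m} - L)" using no_rook by (intro card_mono) auto
  also have "\<dots> = m - card L" using L(1) by (simp add: card_Diff_subset finite_subset)
  finally show False using L(2) card_mono[OF _ L(1)] by simp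
qed

text \<open>Some column of L holds a rook, so with column sums c_j the product of the 1 - c_j vanishes
  on Z; expanding it expresses the product of the c_j by products of fewer column sums.\<close>

lemma low_degree_on_prod_column_sums:
  assumes Z: "Z \<subseteq> rook_placements n m r" and L: "L \<subseteq> {..<m}" "m - r < card L"
  shows "low_degree_on Z n m (card L - 1) (\<lambda>A. \<Prod>j\<in>L. \<Sum>i<n. A i j)"
proof -
  have fin_L: "finite L" using L(1) finite_subset by blast
  let ?R = "\<lambda>A. \<Sum>X\<in>Pow L - {L}. \<Prod>j\<in>X. - (\<Sum>i<n. A i j)"
  have low_R: "low_degree_on Z n m (card L - 1) ?R"
  proof (rule low_degree_on_sum)
    fix X assume "X \<in> Pow L - {L}"
    then have X: "X \<subset> L" by auto
    then have "finite X" using fin_L finite_subset by blast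
    have "low_degree_on Z n m (\<Sum>j\<in>X. 1) (\<lambda>A. \<Prod>j\<in>X. - (\<Sum>i<n. A i j))"
      by (rule low_degree_on_prod[OF \<open>finite X\<close>])
         (use X L(1) low_degree_on_sum_entries low_degree_on_scale[of Z n m 1 _ "-1"] in auto)
    moreover have "card X \<le> card L - 1" using psubset_card_mono[OF fin_L X] by simp
    ultimately show "low_degree_on Z n m (card L - 1) (\<lambda>A. \<Prod>j\<in>X. - (\<Sum>i<n. A i j))"
      using low_degree_on_mono by simp
  qed (use fin_L in simp)
  have "(\<Prod>j\<in>L. \<Sum>i<n. A i j) = - ((-1) ^ card L * ?R A)" if A: "A \<in> Z" for A
  proof -
    obtain j i where ji: "j \<in> L" "i < n" "A i j = 1" using rook_in_columns[OF _ L] Z A by blast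
    then have "(\<Sum>i<n. A i j) = 1" using rook_column_sum Z A by blast
    with ji(1) fin_L have "(\<Prod>j\<in>L. - (\<Sum>i<n. A i j) + 1) = 0" by (intro prod_zero) auto
    then have "(\<Sum>X\<in>Pow L. (\<Prod>j\<in>X. - (\<Sum>i<n. A i j)) * (\<Prod>j\<in>L - X. 1)) = 0"
      using prod_add[OF fin_L, of "\<lambda>j. - (\<Sum>i<n. A i j)" "\<lambda>_. 1"] by simp
    then have "(\<Prod>j\<in>L. - (\<Sum>i<n. A i j)) + ?R A = 0"
      using fin_L by (simp add: sum.remove[of "Pow L" L])
    then have "(-1) ^ card L * (\<Prod>j\<in>L. \<Sum>i<n. A i j) = - ?R A"
      by (simp add: prod_uminus eq_neg_iff_add_eq_0)
    then have "(-1) ^ card L * ((-1) ^ card L * (\<Prod>j\<in>L. \<Sum>i<n. A i j)) = (-1) ^ card L * - ?R A"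
      by simp
    then show ?thesis by (simp flip: power_add mult.assoc add: power_even_eq[symmetric] mult_2[symmetric])
  qed
  moreover have "low_degree_on Z n m (card L - 1) (\<lambda>A. - ((-1) ^ card L * ?R A))"
    using low_degree_on_scale[OF low_degree_on_scale[OF low_R, of "(-1) ^ card L"], of "-1"] by simp
  ultimately show ?thesis
    using low_degree_on_cong by (metis (no_types, lifting))
qed

lemma permutes_extension_exists:
  assumes S: "finite S" and D: "D \<subseteq> S" and g: "inj_on g D" "g ` D \<subseteq> S"
  obtains s where "s permutes S" "\<forall>x\<in>D. s x = g x"
proof -
  have fin_D: "finite D" using D S finite_subset by blast
  have "card (S - D) = card (S - g ` D)"
    using S D g fin_D by (simp add: card_Diff_subset card_image)
  then obtain g' where g': "bij_betw g' (S - D) (S - g ` D)"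
    using finite_same_card_bij S by blast
  define s where "s = (\<lambda>x. if x \<in> D then g x else if x \<in> S then g' x else x)"
  have "bij_betw s D (g ` D)" unfolding s_def using g(1)
    by (simp add: bij_betw_def inj_on_def)
  moreover have "bij_betw s (S - D) (S - g ` D)" unfolding s_def using g'
    by (simp add: bij_betw_def inj_on_def image_def)
  ultimately have "bij_betw s (D \<union> (S - D)) (g ` D \<union> (S - g ` D))"
    by (rule bij_betw_combine) blast
  then have "bij_betw s S S" using D g(2) by (simp add: Un_absorb1 Un_Diff_cancel)
  then have "s permutes S"
    by (rule bij_imp_permutes) (use D in \<open>auto simp: s_def\<close>)
  moreover have "\<forall>x\<in>D. s x = g x" by (simp add: s_def)
  ultimately show ?thesis by (rule that)
qed

lemma card_permutes_extending:
  assumes S: "finite S" and D: "D \<subseteq> S" and g: "inj_on g D" "g ` D \<subseteq> S"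
  shows "card {s. s permutes S \<and> (\<forall>x\<in>D. s x = g x)} = fact (card S - card D)"
proof -
  have fin_D: "finite D" using D S finite_subset by blast
  obtain s0 where s0: "s0 permutes S" and s0_D: "\<forall>x\<in>D. s0 x = g x"
    using permutes_extension_exists[OF assms] .
  let ?P = "{p. p permutes (S - D)}"
  let ?Q = "{s. s permutes S \<and> (\<forall>x\<in>D. s x = g x)}"
  have "bij_betw (\<lambda>p. s0 \<circ> p) ?P ?Q"
  proof (rule bij_betwI[where g = "\<lambda>s. inv s0 \<circ> s"])
    show "(\<lambda>p. s0 \<circ> p) \<in> ?P \<rightarrow> ?Q"
    proof
      fix p assume "p \<in> ?P"
      then have p: "p permutes (S - D)" by simp
      then have "p permutes S" using permutes_subset by blast
      moreover have "\<forall>x\<in>D. p x = x" using p by (meson DiffD2 permutes_not_in)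
      ultimately show "s0 \<circ> p \<in> ?Q" using s0 s0_D permutes_compose by auto
    qed
    show "(\<lambda>s. inv s0 \<circ> s) \<in> ?Q \<rightarrow> ?P"
    proof
      fix s assume "s \<in> ?Q"
      then have s: "s permutes S" "\<forall>x\<in>D. s x = g x" by auto
      have perm: "inv s0 \<circ> s permutes S" using s(1) permutes_inv[OF s0] permutes_compose by blast
      have "\<forall>x\<in>D. (inv s0 \<circ> s) x = x"
        using s(2) s0_D permutes_inverses(2)[OF s0] by (metis comp_apply)
      with perm have "inv s0 \<circ> s permutes (S - D)"
        unfolding permutes_def by (metis Diff_iff)
      then show "inv s0 \<circ> s \<in> ?P" by simp
    qed
    show "inv s0 \<circ> (s0 \<circ> p) = p" for p
      using permutes_inverses(2)[OF s0] by (simp add: fun_eq_iff)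
    show "s0 \<circ> (inv s0 \<circ> s) = s" for s
      using permutes_inverses(1)[OF s0] by (simp add: fun_eq_iff)
  qed
  then have "card ?Q = card ?P" by (simp add: bij_betw_same_card)
  also have "\<dots> = fact (card (S - D))"
    using S by (intro card_permutations) auto
  also have "card (S - D) = card S - card D"
    using D fin_D by (simp add: card_Diff_subset)
  finally show ?thesis .
qed

text \<open>The product is 1 exactly when s sends each row of K to the row of the rook in the same
  column, so the sum counts the permutations of S extending that prescription.\<close>

lemma sum_permutes_prod_rook_entries:
  assumes A: "A \<in> rook_placements n m r" and S: "finite S"
    and K: "finite K" "fst ` K \<subseteq> S" "inj_on fst K" "inj_on snd K"
  shows "(\<Sum>s\<in>{s. s permutes S}. \<Prod>v\<in>K. A (s (fst v)) (snd v)) =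
     of_nat (fact (card S - card K)) * (\<Prod>v\<in>K. \<Sum>i\<in>S. A i (snd v))"
proof (cases "\<forall>v\<in>K. \<exists>i\<in>S. A i (snd v) = 1")
  case True
  then obtain \<rho> where \<rho>: "\<forall>v\<in>K. \<rho> v \<in> S \<and> A (\<rho> v) (snd v) = 1" by metis
  have col_sum: "(\<Sum>i\<in>S. A i (snd v)) = 1" if "v \<in> K" for v
    using rook_column_sum[OF A S] \<rho> that by blast
  have prod_eq: "(\<Prod>v\<in>K. A (s (fst v)) (snd v)) = (if \<forall>v\<in>K. s (fst v) = \<rho> v then 1 else 0)" for s
  proof (cases "\<forall>v\<in>K. s (fst v) = \<rho> v")
    case False
    then obtain v where v: "v \<in> K" "s (fst v) \<noteq> \<rho> v" by blast
    then have "A (s (fst v)) (snd v) = 0"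
      using \<rho> rook_placementsD(1,6)[OF A] by metis
    with False v K(1) show ?thesis by (simp add: prod_zero_iff) blast
  qed (use \<rho> in simp)
  define g where "g = (\<lambda>x. \<rho> (inv_into K fst x))"
  have g_fst: "g (fst v) = \<rho> v" if "v \<in> K" for v using that K(3) by (simp add: g_def)
  have "inj_on g (fst ` K)"
  proof (rule inj_onI)
    fix x y assume "x \<in> fst ` K" "y \<in> fst ` K" "g x = g y"
    then obtain v w where vw: "v \<in> K" "w \<in> K" "x = fst v" "y = fst w" "\<rho> v = \<rho> w"
      using g_fst by auto
    then have "snd v = snd w" using \<rho> rook_placementsD(5)[OF A] by metis
    with vw K(4) show "x = y" by (metis inj_onD)
  qed
  moreover have "g ` fst ` K \<subseteq> S" using \<rho> g_fst by auto
  ultimately have "card {s. s permutes S \<and> (\<forall>x\<in>fst ` K. s x = g x)} = fact (card S - card K)"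
    using card_permutes_extending[OF S K(2)] card_image[OF K(3)] by simp
  moreover have "(\<forall>v\<in>K. s (fst v) = \<rho> v) \<longleftrightarrow> (\<forall>x\<in>fst ` K. s x = g x)" for s
    using g_fst by auto
  ultimately have "(\<Sum>s\<in>{s. s permutes S}. \<Prod>v\<in>K. A (s (fst v)) (snd v)) = of_nat (fact (card S - card K))"
    using finite_permutations[OF S] by (simp add: prod_eq sum.If_cases Int_def conj_commute)
  with col_sum show ?thesis by simp
next
  case False
  then obtain v where v: "v \<in> K" "\<forall>i\<in>S. A i (snd v) = 0"
    using rook_placementsD(1)[OF A] by blast
  then have "(\<Sum>i\<in>S. A i (snd v)) = 0" by simp
  then have "(\<Prod>v\<in>K. \<Sum>i\<in>S. A i (snd v)) = 0" using K(1) v(1) by (intro prod_zero) auto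
  moreover have "(\<Prod>v\<in>K. A (s (fst v)) (snd v)) = 0" if "s permutes S" for s
    using v K permutes_in_image[OF that] by (intro prod_zero) auto
  ultimately show ?thesis by simp
qed

lemma sum_permutes_prod_entries:
  assumes A: "A \<in> rook_placements n m r" and S: "finite S"
    and K: "finite K" "inj_on fst K" "inj_on snd K"
  defines "KS \<equiv> {v\<in>K. fst v \<in> S}"
  shows "(\<Sum>s\<in>{s. s permutes S}. \<Prod>v\<in>K. A (s (fst v)) (snd v)) =
     of_nat (fact (card S - card KS)) *
       ((\<Prod>v\<in>K - KS. A (fst v) (snd v)) * (\<Prod>v\<in>KS. \<Sum>i\<in>S. A i (snd v)))"
proof -
  have KS: "KS \<subseteq> K" "finite KS" using K(1) by (auto simp: KS_def)
  have split: "(\<Prod>v\<in>K. A (s (fst v)) (snd v)) =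
      (\<Prod>v\<in>K - KS. A (fst v) (snd v)) * (\<Prod>v\<in>KS. A (s (fst v)) (snd v))"
    if s: "s permutes S" for s
  proof -
    have "(\<Prod>v\<in>K - KS. A (s (fst v)) (snd v)) = (\<Prod>v\<in>K - KS. A (fst v) (snd v))"
      using permutes_not_in[OF s] by (intro prod.cong refl) (auto simp: KS_def)
    with prod.subset_diff[OF KS(1) K(1), of "\<lambda>v. A (s (fst v)) (snd v)"] show ?thesis by simp
  qed
  have "(\<Sum>s\<in>{s. s permutes S}. \<Prod>v\<in>K. A (s (fst v)) (snd v)) =
      (\<Sum>s\<in>{s. s permutes S}. (\<Prod>v\<in>K - KS. A (fst v) (snd v)) * (\<Prod>v\<in>KS. A (s (fst v)) (snd v)))"
    using split by (intro sum.cong) auto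
  also have "\<dots> = (\<Prod>v\<in>K - KS. A (fst v) (snd v)) *
      (\<Sum>s\<in>{s. s permutes S}. \<Prod>v\<in>KS. A (s (fst v)) (snd v))"
    by (simp add: sum_distrib_left)
  also have "(\<Sum>s\<in>{s. s permutes S}. \<Prod>v\<in>KS. A (s (fst v)) (snd v)) =
      of_nat (fact (card S - card KS)) * (\<Prod>v\<in>KS. \<Sum>i\<in>S. A i (snd v))"
    using K(2,3) KS(1) by (intro sum_permutes_prod_rook_entries[OF A S KS(2)])
      (auto simp: KS_def intro: inj_on_subset)
  finally show ?thesis by (simp add: mult_ac)
qed

text \<open>If the product were nonzero, the columns of the cells in K - KS and in KS - L would each carry
  a rook in a row outside S, needing more such rows than there are.\<close>

lemma rook_outside_rows_prod_eq_0:
  assumes A: "A \<in> rook_placements n m r" and S: "S \<subseteq> {..<n}" "card S = n + m - d - r + 1"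
    and dr: "d \<le> r" "r \<le> m"
    and K: "finite K" "card K = d" "K \<subseteq> {..<n} \<times> {..<m}" "inj_on snd K"
  defines "KS \<equiv> {v\<in>K. fst v \<in> S}"
  assumes L: "L \<subseteq> KS" "card L \<le> m - r"
  shows "(\<Prod>v\<in>K - KS. A (fst v) (snd v)) * (\<Prod>v\<in>KS - L. \<Sum>i\<in>{..<n} - S. A i (snd v)) = 0"
proof (rule ccontr)
  assume "\<not> ?thesis"
  then have nonzero_K: "(\<Prod>v\<in>K - KS. A (fst v) (snd v)) \<noteq> 0"
    and nonzero_L: "(\<Prod>v\<in>KS - L. \<Sum>i\<in>{..<n} - S. A i (snd v)) \<noteq> 0"
    by auto
  have KS: "KS \<subseteq> K" "finite KS" using K(1) by (auto simp: KS_def)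
  have fin_L: "finite L" using L(1) KS(2) finite_subset by blast
  have rooks_K: "\<forall>v\<in>K - KS. A (fst v) (snd v) = 1"
    using nonzero_K K(1) rook_placementsD(1)[OF A] by (metis finite_Diff prod_zero_iff)
  have "\<forall>v\<in>KS - L. \<exists>i\<in>{..<n} - S. A i (snd v) = 1"
  proof
    fix v assume "v \<in> KS - L"
    then have "(\<Sum>i\<in>{..<n} - S. A i (snd v)) \<noteq> 0"
      using nonzero_L KS(2) by (metis finite_Diff prod_zero_iff)
    then obtain i where "i \<in> {..<n} - S" "A i (snd v) \<noteq> 0" by (meson sum.neutral)
    then show "\<exists>i\<in>{..<n} - S. A i (snd v) = 1" using rook_placementsD(1)[OF A] by blast
  qed
  then obtain \<rho> where \<rho>: "\<forall>v\<in>KS - L. \<rho> v \<in> {..<n} - S \<and> A (\<rho> v) (snd v) = 1" by metis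
  define U where "U = (K - KS) \<union> (KS - L)"
  define row where "row = (\<lambda>v. if v \<in> K - KS then fst v else \<rho> v)"
  have row: "\<forall>v\<in>U. row v \<in> {..<n} - S \<and> A (row v) (snd v) = 1"
    using rooks_K \<rho> K(3) by (auto simp: U_def row_def KS_def)
  have "inj_on row U"
  proof (rule inj_onI)
    fix v w assume vw: "v \<in> U" "w \<in> U" "row v = row w"
    then have "snd v = snd w" using row rook_placementsD(5)[OF A] by metis
    moreover have "U \<subseteq> K" using KS(1) by (auto simp: U_def)
    ultimately show "v = w" using K(4) vw(1,2) by (metis inj_onD subsetD)
  qed
  then have "card U \<le> card ({..<n} - S)"
    using row by (intro card_inj_on_le) auto
  also have "\<dots> = n - card S" using S(1) by (simp add: card_Diff_subset finite_subset)
  finally have "card U \<le> n - card S" .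
  moreover have "card U = card (K - KS) + (card KS - card L)"
    unfolding U_def using K(1) KS fin_L L(1)
    by (subst card_Un_disjoint) (auto simp: card_Diff_subset)
  moreover have "card (K - KS) + card KS = d"
    using K(1,2) KS card_mono[OF K(1) KS(1)] by (simp add: card_Diff_subset)
  moreover have "card S \<le> n" using S(1) card_mono[of "{..<n}"] by simp
  ultimately show False using S(2) dr L(2) card_mono[OF KS(2) L(1)] by linarith
qed

lemma low_degree_on_row_block_term:
  assumes Z: "Z \<subseteq> rook_placements n m r"
    and K: "finite K" "K \<subseteq> {..<n} \<times> {..<m}" "inj_on snd K"
    and KS: "KS \<subseteq> K" and L: "L \<subseteq> KS" "m - r < card L"
  shows "low_degree_on Z n m (card K - 1) (\<lambda>A. (\<Prod>v\<in>K - KS. A (fst v) (snd v)) *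
    ((\<Prod>v\<in>L. \<Sum>i<n. A i (snd v)) * (\<Prod>v\<in>KS - L. - (\<Sum>i\<in>{..<n} - S. A i (snd v)))))"
proof -
  have fin: "finite KS" "finite L"
    using finite_subset[OF KS K(1)] finite_subset[OF L(1)] by auto
  have inj_L: "inj_on snd L" using K(3) L(1) KS inj_on_subset by blast
  have "snd ` L \<subseteq> {..<m}" using L(1) KS K(2) by fastforce
  from low_degree_on_prod_column_sums[OF Z this] L(2)
  have low_c: "low_degree_on Z n m (card L - 1) (\<lambda>A. \<Prod>v\<in>L. \<Sum>i<n. A i (snd v))"
    by (simp add: card_image[OF inj_L] prod.reindex[OF inj_L])
  have "low_degree_on Z n m 1 (\<lambda>A. - (\<Sum>i\<in>{..<n} - S. A i (snd v)))" if "v \<in> KS - L" for v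
  proof -
    have "snd v < m" using that KS K(2) by auto
    then have "low_degree_on Z n m 1 (\<lambda>A. \<Sum>i\<in>{..<n} - S. A i (snd v))"
      by (intro low_degree_on_sum_entries) auto
    from low_degree_on_scale[OF this, of "-1"] show ?thesis by simp
  qed
  then have low_t: "low_degree_on Z n m (card (KS - L))
      (\<lambda>A. \<Prod>v\<in>KS - L. - (\<Sum>i\<in>{..<n} - S. A i (snd v)))"
    using low_degree_on_prod[of "KS - L" Z n m "\<lambda>_. 1"] fin(1) by simp
  have low_K: "low_degree_on Z n m (card (K - KS)) (\<lambda>A. \<Prod>v\<in>K - KS. A (fst v) (snd v))"
    by (rule low_degree_on_prod_entries) (use K(1,2) in auto)
  have "card (K - KS) + (card L - 1 + card (KS - L)) = card K - 1"
    using K(1) KS L fin card_mono[OF fin(1) L(1)] card_mono[OF K(1) KS]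
    by (simp add: card_Diff_subset)
  with low_degree_on_mult[OF low_K low_degree_on_mult[OF low_c low_t]] show ?thesis by simp
qed

text \<open>Split each row-block sum over S into the full column sum minus the sum over the rows
  outside S and expand: terms with more than m - r column sums have lower degree, the others
  vanish on Z.\<close>

lemma low_degree_on_prod_row_block:
  assumes Z: "Z \<subseteq> rook_placements n m r" and S: "S \<subseteq> {..<n}" "card S = n + m - d - r + 1"
    and dr: "d \<le> r" "r \<le> m"
    and K: "finite K" "card K = d" "K \<subseteq> {..<n} \<times> {..<m}" "inj_on snd K"
  defines "KS \<equiv> {v\<in>K. fst v \<in> S}"
  shows "low_degree_on Z n m (d - 1)
    (\<lambda>A. (\<Prod>v\<in>K - KS. A (fst v) (snd v)) * (\<Prod>v\<in>KS. \<Sum>i\<in>S. A i (snd v)))"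
proof -
  let ?c = "\<lambda>v A. \<Sum>i<n. A i (snd v)"
  let ?t = "\<lambda>v A. \<Sum>i\<in>{..<n} - S. A i (snd v)"
  let ?T = "\<lambda>L A. (\<Prod>v\<in>K - KS. A (fst v) (snd v)) * ((\<Prod>v\<in>L. ?c v A) * (\<Prod>v\<in>KS - L. - ?t v A))"
  have KS: "KS \<subseteq> K" "finite KS" using K(1) by (auto simp: KS_def)
  have expand: "(\<Prod>v\<in>K - KS. A (fst v) (snd v)) * (\<Prod>v\<in>KS. \<Sum>i\<in>S. A i (snd v)) =
      (\<Sum>L\<in>Pow KS. ?T L A)" for A :: "nat \<Rightarrow> nat \<Rightarrow> complex"
  proof -
    have "(\<Sum>i\<in>S. A i j) = (\<Sum>i<n. A i j) + - (\<Sum>i\<in>{..<n} - S. A i j)" for j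
      using sum_diff[OF _ S(1), of "\<lambda>i. A i j"] by simp
    then have "(\<Prod>v\<in>KS. \<Sum>i\<in>S. A i (snd v)) = (\<Prod>v\<in>KS. ?c v A + - ?t v A)" by simp
    also have "\<dots> = (\<Sum>L\<in>Pow KS. (\<Prod>v\<in>L. ?c v A) * (\<Prod>v\<in>KS - L. - ?t v A))"
      by (rule prod_add[OF KS(2)])
    finally show ?thesis by (simp add: sum_distrib_left)
  qed
  have "low_degree_on Z n m (d - 1) (\<lambda>A. \<Sum>L\<in>Pow KS. ?T L A)"
  proof (rule low_degree_on_sum)
    fix L assume "L \<in> Pow KS"
    then have L: "L \<subseteq> KS" "finite L" using KS(2) finite_subset by auto
    show "low_degree_on Z n m (d - 1) (?T L)"
    proof (cases "m - r < card L")
      case True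
      from low_degree_on_row_block_term[OF Z K(1,3,4) KS(1) L(1) True] K(2) show ?thesis by simp
    next
      case False
      show ?thesis
      proof (rule low_degree_on_zero_on)
        fix A assume "A \<in> Z"
        with Z have "A \<in> rook_placements n m r" by blast
        moreover have "card L \<le> m - r" using False by simp
        ultimately have "(\<Prod>v\<in>K - KS. A (fst v) (snd v)) * (\<Prod>v\<in>KS - L. ?t v A) = 0"
          using rook_outside_rows_prod_eq_0[OF _ S dr K, folded KS_def] L(1) by blast
        then show "?T L A = 0" by (auto simp: prod_uminus)
      qed
    qed
  qed (use KS(2) in simp)
  with expand show ?thesis by simp
qed

lemma prod_rook_entries_eq_0:
  assumes A: "A \<in> rook_placements n m r" and s: "inj s" and K: "finite K"
    and not_matching: "\<not> (inj_on fst K \<and> inj_on snd K)"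
  shows "(\<Prod>v\<in>K. A (s (fst v)) (snd v)) = 0"
proof -
  have "\<exists>v\<in>K. A (s (fst v)) (snd v) \<noteq> 1"
  proof (rule ccontr)
    assume "\<not> ?thesis"
    then have rooks: "\<forall>v\<in>K. A (s (fst v)) (snd v) = 1" by blast
    have "inj_on fst K"
    proof (rule inj_onI)
      fix v w assume vw: "v \<in> K" "w \<in> K" "fst v = fst w"
      then have "snd v = snd w" using rooks rook_placementsD(5)[OF A] by metis
      with vw(3) show "v = w" by (simp add: prod_eq_iff)
    qed
    moreover have "inj_on snd K"
    proof (rule inj_onI)
      fix v w assume vw: "v \<in> K" "w \<in> K" "snd v = snd w"
      then have "s (fst v) = s (fst w)" using rooks rook_placementsD(6)[OF A] by metis
      with s vw(3) show "v = w" by (simp add: prod_eq_iff inj_eq)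
    qed
    ultimately show False using not_matching by blast
  qed
  then obtain v where "v \<in> K" "A (s (fst v)) (snd v) = 0" using rook_placementsD(1)[OF A] by blast
  with K show ?thesis by (intro prod_zero) auto
qed

lemma low_degree_on_row_symmetrized_prod:
  assumes Z: "Z \<subseteq> rook_placements n m r" and S: "S \<subseteq> {..<n}" "card S = n + m - d - r + 1"
    and dr: "d \<le> r" "r \<le> m" and K: "finite K" "card K \<le> d" "K \<subseteq> {..<n} \<times> {..<m}"
  shows "low_degree_on Z n m (d - 1) (\<lambda>A. \<Sum>s\<in>{s. s permutes S}. \<Prod>v\<in>K. A (s (fst v)) (snd v))"
proof -
  have fin_P: "finite {s. s permutes S}" using S(1) finite_subset finite_permutations by blast
  consider "card K < d" | "card K = d" "inj_on fst K \<and> inj_on snd K" | "\<not> (inj_on fst K \<and> inj_on snd K)"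
    using K(2) by linarith
  then show ?thesis
  proof cases
    case 1
    have "s i < n" if "s permutes S" "i < n" for s i
      using that S(1) by (metis lessThan_iff permutes_in_image permutes_not_in subsetD)
    then have "low_degree_on Z n m (card K) (\<lambda>A. \<Prod>v\<in>K. A (s (fst v)) (snd v))"
      if "s \<in> {s. s permutes S}" for s
      using that K by (intro low_degree_on_prod_entries) auto
    then have "low_degree_on Z n m (card K) (\<lambda>A. \<Sum>s\<in>{s. s permutes S}. \<Prod>v\<in>K. A (s (fst v)) (snd v))"
      by (rule low_degree_on_sum[OF fin_P])
    with 1 show ?thesis by (auto elim: low_degree_on_mono)
  next
    case 2
    let ?KS = "{v\<in>K. fst v \<in> S}"
    have "low_degree_on Z n m (d - 1)
        (\<lambda>A. (\<Prod>v\<in>K - ?KS. A (fst v) (snd v)) * (\<Prod>v\<in>?KS. \<Sum>i\<in>S. A i (snd v)))"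
      using 2 by (intro low_degree_on_prod_row_block[OF Z S dr K(1) _ K(3)]) simp_all
    then have "low_degree_on Z n m (d - 1) (\<lambda>A. of_nat (fact (card S - card ?KS)) *
        ((\<Prod>v\<in>K - ?KS. A (fst v) (snd v)) * (\<Prod>v\<in>?KS. \<Sum>i\<in>S. A i (snd v))))"
      by (rule low_degree_on_scale)
    moreover have "of_nat (fact (card S - card ?KS)) *
        ((\<Prod>v\<in>K - ?KS. A (fst v) (snd v)) * (\<Prod>v\<in>?KS. \<Sum>i\<in>S. A i (snd v)))
        = (\<Sum>s\<in>{s. s permutes S}. \<Prod>v\<in>K. A (s (fst v)) (snd v))" if "A \<in> Z" for A
      using Z that 2 S(1) K(1)
      by (intro sum_permutes_prod_entries[symmetric]) (auto intro: finite_subset)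
    ultimately show ?thesis by (rule low_degree_on_cong)
  next
    case 3
    show ?thesis
      by (rule low_degree_on_zero_on)
        (use Z 3 K(1) in \<open>auto intro!: sum.neutral prod_rook_entries_eq_0 permutes_inj\<close>)
  qed
qed

lemma low_degree_on_row_symmetrized_mono:
  assumes Z: "Z \<subseteq> rook_placements n m r" and S: "S \<subseteq> {..<n}" "card S = n + m - d - r + 1"
    and dr: "d \<le> r" "r \<le> m" and a: "mono_within n m a" "mdeg a = d"
  shows "low_degree_on Z n m (d - 1) (\<lambda>A. \<Sum>s\<in>{s. s permutes S}. mono_eval (\<lambda>i j. A (s i) j) a)"
proof -
  have "card (Poly_Mapping.keys a) \<le> d" using card_keys_le_mdeg[of a] a(2) by simp
  moreover have "Poly_Mapping.keys a \<subseteq> {..<n} \<times> {..<m}" using a(1) by (auto simp: mono_within_def)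
  ultimately have "low_degree_on Z n m (d - 1)
      (\<lambda>A. \<Sum>s\<in>{s. s permutes S}. \<Prod>v\<in>Poly_Mapping.keys a. A (s (fst v)) (snd v))"
    by (intro low_degree_on_row_symmetrized_prod[OF Z S dr finite_keys])
  then show ?thesis
    by (rule low_degree_on_cong)
       (use Z in \<open>auto intro!: sum.cong mono_eval_01[symmetric] dest: rook_placementsD(1)\<close>)
qed

definition transpose_mono :: "mono \<Rightarrow> mono" where
  "transpose_mono a = Abs_poly_mapping (\<lambda>(i, j). Poly_Mapping.lookup a (j, i))"

definition transpose_mat :: "(nat \<Rightarrow> nat \<Rightarrow> complex) \<Rightarrow> nat \<Rightarrow> nat \<Rightarrow> complex" where
  "transpose_mat A = (\<lambda>i j. A j i)"

lemma lookup_transpose_mono: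
  "Poly_Mapping.lookup (transpose_mono a) = (\<lambda>(i, j). Poly_Mapping.lookup a (j, i))"
proof -
  have "{x. (\<lambda>(i, j). Poly_Mapping.lookup a (j, i)) x \<noteq> 0} = prod.swap ` Poly_Mapping.keys a"
  proof (rule set_eqI)
    fix x :: "nat \<times> nat"
    show "x \<in> {x. (\<lambda>(i, j). Poly_Mapping.lookup a (j, i)) x \<noteq> 0} \<longleftrightarrow> x \<in> prod.swap ` Poly_Mapping.keys a"
      by (cases x) (auto simp: in_keys_iff)
  qed
  then show ?thesis unfolding transpose_mono_def by simp
qed

lemma keys_transpose_mono: "Poly_Mapping.keys (transpose_mono a) = prod.swap ` Poly_Mapping.keys a"
proof (rule set_eqI)
  fix x :: "nat \<times> nat"
  show "x \<in> Poly_Mapping.keys (transpose_mono a) \<longleftrightarrow> x \<in> prod.swap ` Poly_Mapping.keys a"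
    by (cases x) (auto simp: in_keys_iff lookup_transpose_mono)
qed

lemma transpose_mono_transpose_mono [simp]: "transpose_mono (transpose_mono a) = a"
  by (rule poly_mapping_eqI) (simp add: lookup_transpose_mono split_beta)

lemma mono_eval_transpose_mono: "mono_eval A (transpose_mono a) = mono_eval (transpose_mat A) a"
proof -
  have "mono_eval A (transpose_mono a) = (\<Prod>v\<in>prod.swap ` Poly_Mapping.keys a.
      A (fst v) (snd v) ^ Poly_Mapping.lookup a (prod.swap v))"
    unfolding mono_eval_def keys_transpose_mono lookup_transpose_mono by (simp add: split_beta prod.swap_def)
  also have "\<dots> = mono_eval (transpose_mat A) a"
    by (subst prod.reindex) (auto simp: mono_eval_def transpose_mat_def)
  finally show ?thesis .
qed

lemma mdeg_transpose_mono: "mdeg (transpose_mono a) = mdeg a"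
  unfolding mdeg_def keys_transpose_mono lookup_transpose_mono
  by (subst sum.reindex) (auto simp: split_beta)

lemma mono_within_transpose_mono: "mono_within n m a \<Longrightarrow> mono_within m n (transpose_mono a)"
  by (auto simp: mono_within_def keys_transpose_mono)

lemma low_degree_on_transpose:
  assumes "low_degree_on (transpose_mat ` Z) m n k F"
  shows "low_degree_on Z n m k (\<lambda>A. F (transpose_mat A))"
proof -
  obtain M c where M: "finite M" "\<forall>a\<in>M. mdeg a \<le> k \<and> mono_within m n a"
      "\<forall>B\<in>transpose_mat ` Z. F B = (\<Sum>a\<in>M. c a * mono_eval B a)"
    using assms unfolding low_degree_on_def by blast
  have "inj_on transpose_mono M" by (metis inj_onI transpose_mono_transpose_mono)
  then have "\<forall>A\<in>Z. F (transpose_mat A) =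
      (\<Sum>b\<in>transpose_mono ` M. c (transpose_mono b) * mono_eval A b)"
    using M(3) by (simp add: sum.reindex mono_eval_transpose_mono)
  moreover have "\<forall>b\<in>transpose_mono ` M. mdeg b \<le> k \<and> mono_within n m b"
    using M(2) mono_within_transpose_mono mdeg_transpose_mono by fastforce
  ultimately show ?thesis
    unfolding low_degree_on_def using M(1)
    by (intro exI[of _ "transpose_mono ` M"] exI[of _ "\<lambda>b. c (transpose_mono b)"]) auto
qed

lemma transpose_mat_rook_placements:
  assumes A: "A \<in> rook_placements n m r"
  shows "transpose_mat A \<in> rook_placements m n r"
proof -
  have "{(i, j). i < m \<and> j < n \<and> A j i = 1} = prod.swap ` {(i, j). i < n \<and> j < m \<and> A i j = 1}"
    by (auto simp: image_iff)
  then have "card {(i, j). i < m \<and> j < n \<and> A j i = 1} = r"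
    using rook_placementsD(4)[OF A] by (simp add: card_image)
  with rook_placementsD[OF A] show ?thesis
    unfolding rook_placements_def transpose_mat_def by auto
qed

lemma low_degree_on_col_symmetrized_mono:
  assumes Z: "Z \<subseteq> rook_placements n m r" and S: "S \<subseteq> {..<m}" "card S = n + m - d - r + 1"
    and dr: "d \<le> r" "r \<le> n" and a: "mono_within n m a" "mdeg a = d"
  shows "low_degree_on Z n m (d - 1) (\<lambda>A. \<Sum>s\<in>{s. s permutes S}. mono_eval (\<lambda>i j. A i (s j)) a)"
proof -
  have "transpose_mat ` Z \<subseteq> rook_placements m n r"
    using Z transpose_mat_rook_placements by blast
  moreover have "card S = m + n - d - r + 1" using S(2) by (simp add: add.commute)
  ultimately have "low_degree_on (transpose_mat ` Z) m n (d - 1)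
      (\<lambda>B. \<Sum>s\<in>{s. s permutes S}. mono_eval (\<lambda>i j. B (s i) j) (transpose_mono a))"
    using S(1) dr mono_within_transpose_mono[OF a(1)] a(2)
    by (intro low_degree_on_row_symmetrized_mono) (simp_all add: mdeg_transpose_mono)
  from low_degree_on_transpose[OF this] show ?thesis
    by (simp add: mono_eval_transpose_mono transpose_mat_def)
qed

section \<open>Tableaux and polytabloids\<close>

lemma young_diagram_eq_UN: "young_diagram la = (\<Union>i\<in>{..<length la}. {i} \<times> {..<la ! i})"
  by (auto simp: young_diagram_def)

lemma finite_young_diagram: "finite (young_diagram la)"
  unfolding young_diagram_eq_UN by auto

lemma card_young_diagram: "card (young_diagram la) = sum_list la"
proof -
  have "card (young_diagram la) = (\<Sum>i\<in>{..<length la}. card ({i} \<times> {..<la ! i}))"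
    unfolding young_diagram_eq_UN by (rule card_UN_disjoint) auto
  also have "\<dots> = (\<Sum>i\<in>{..<length la}. la ! i)" by (simp add: card_cartesian_product)
  also have "\<dots> = sum_list la" by (simp add: sum_list_sum_nth atLeast0LessThan)
  finally show ?thesis .
qed

lemma tableau_exists: "is_partition n la \<Longrightarrow> \<exists>T. tableau n la T"
  unfolding tableau_def is_partition_def
  using finite_same_card_bij[OF finite_young_diagram, of "{..<n}" la] card_young_diagram by auto

lemma cell_of_tableau:
  assumes T: "tableau n la T" and i: "i < n"
  shows "cell_of la T i \<in> young_diagram la" "T (cell_of la T i) = i"
  using T i unfolding tableau_def cell_of_def
  by (auto simp: bij_betw_def inv_into_into f_inv_into_f)

lemma cell_of_inj:
  assumes T: "tableau n la T" and "i < n" "j < n" "cell_of la T i = cell_of la T j"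
  shows "i = j"
  using cell_of_tableau[OF T] assms(2-4) by metis

lemma cell_of_tableau_cell:
  assumes T: "tableau n la T" and c: "c \<in> young_diagram la"
  shows "cell_of la T (T c) = c"
  using T c unfolding tableau_def cell_of_def by (simp add: bij_betw_def)

lemma tableau_comp:
  assumes T: "tableau n la T" and s: "s permutes {..<n}"
  shows "tableau n la (s \<circ> T)"
  using T permutes_imp_bij[OF s] unfolding tableau_def by (rule bij_betw_trans)

lemma cell_of_comp:
  assumes T: "tableau n la T" and s: "s permutes {..<n}" and i: "i < n"
  shows "cell_of la (s \<circ> T) i = cell_of la T (inv s i)"
proof -
  have T': "tableau n la (s \<circ> T)" using tableau_comp[OF T s] .
  have isn: "inv s i < n" using s i by (metis lessThan_iff permutes_inv permutes_in_image)
  have "(s \<circ> T) (cell_of la T (inv s i)) = i"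
    using cell_of_tableau(2)[OF T isn] permutes_inverses(1)[OF s] by simp
  then show ?thesis
    unfolding cell_of_def[of la "s \<circ> T"]
    using T' cell_of_tableau(1)[OF T isn] unfolding tableau_def
    by (intro inv_into_f_eq) (auto simp: bij_betw_def)
qed

lemma tabloid_of_comp:
  assumes T: "tableau n la T" and s: "s permutes {..<n}"
  shows "tabloid_of n la (s \<circ> T) = tabloid_of n la T \<circ> inv s"
proof
  fix i
  have iff: "inv s i < n \<longleftrightarrow> i < n" using s
    by (metis lessThan_iff permutes_inv permutes_in_image permutes_inverses(1))
  show "tabloid_of n la (s \<circ> T) i = (tabloid_of n la T \<circ> inv s) i"
    using cell_of_comp[OF T s] iff by (simp add: tabloid_of_def)
qed

lemma col_group_comp:
  assumes T: "tableau n la T" and s: "s permutes {..<n}"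
  shows "col_group n la (s \<circ> T) = (\<lambda>p. s \<circ> p \<circ> inv s) ` col_group n la T"
proof -
  have si: "inv s permutes {..<n}" using permutes_inv[OF s] .
  have sin: "s i < n" if "i < n" for i using s that by (metis lessThan_iff permutes_in_image)
  have isn: "inv s i < n" if "i < n" for i using si that by (metis lessThan_iff permutes_in_image)
  have ss: "s (inv s x) = x" "inv s (s x) = x" for x using permutes_inverses[OF s] by auto
  show ?thesis
  proof (intro equalityI subsetI)
    fix q assume "q \<in> col_group n la (s \<circ> T)"
    then have q: "q permutes {..<n}" "\<forall>i<n. snd (cell_of la (s \<circ> T) (q i)) = snd (cell_of la (s \<circ> T) i)"
      by (auto simp: col_group_def)
    define p where "p = inv s \<circ> q \<circ> s"
    have pp: "p permutes {..<n}" unfolding p_def using q(1) s si by (simp add: permutes_compose)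
    have "\<forall>j<n. snd (cell_of la T (p j)) = snd (cell_of la T j)"
    proof (intro allI impI)
      fix j assume j: "j < n"
      have qn: "q (s j) < n" using q(1) sin[OF j] by (metis lessThan_iff permutes_in_image)
      have "snd (cell_of la (s \<circ> T) (q (s j))) = snd (cell_of la (s \<circ> T) (s j))" using q(2) sin[OF j] by blast
      then show "snd (cell_of la T (p j)) = snd (cell_of la T j)"
        using cell_of_comp[OF T s qn] cell_of_comp[OF T s sin[OF j]] by (simp add: p_def ss)
    qed
    then have "p \<in> col_group n la T" using pp by (simp add: col_group_def)
    moreover have "q = s \<circ> p \<circ> inv s" by (simp add: p_def fun_eq_iff ss)
    ultimately show "q \<in> (\<lambda>p. s \<circ> p \<circ> inv s) ` col_group n la T" by blast
  next
    fix q assume "q \<in> (\<lambda>p. s \<circ> p \<circ> inv s) ` col_group n la T"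
    then obtain p where p: "p \<in> col_group n la T" "q = s \<circ> p \<circ> inv s" by blast
    then have pp: "p permutes {..<n}" "\<forall>j<n. snd (cell_of la T (p j)) = snd (cell_of la T j)"
      by (auto simp: col_group_def)
    have qp: "q permutes {..<n}" using p(2) pp(1) s si by (simp add: permutes_compose)
    have "\<forall>i<n. snd (cell_of la (s \<circ> T) (q i)) = snd (cell_of la (s \<circ> T) i)"
    proof (intro allI impI)
      fix i assume i: "i < n"
      have qn: "q i < n" using qp i by (metis lessThan_iff permutes_in_image)
      have "snd (cell_of la T (p (inv s i))) = snd (cell_of la T (inv s i))" using pp(2) isn[OF i] by blast
      then show "snd (cell_of la (s \<circ> T) (q i)) = snd (cell_of la (s \<circ> T) i)"
        using cell_of_comp[OF T s qn] cell_of_comp[OF T s i] by (simp add: p(2) ss)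
    qed
    then show "q \<in> col_group n la (s \<circ> T)" using qp by (simp add: col_group_def)
  qed
qed

lemma sign_conjugate:
  assumes "permutation s" "permutation p"
  shows "sign (s \<circ> p \<circ> inv s) = sign p"
proof -
  have "sign (s \<circ> p \<circ> inv s) = sign s * sign p * sign (inv s)"
    using assms permutation_inverse[OF assms(1)] by (simp add: sign_compose permutation_compose)
  then show ?thesis using sign_inverse[OF assms(1)] by (simp add: mult_ac)
qed

lemma comp_bij_eq_iff:
  assumes "bij s"
  shows "t \<circ> s = F \<longleftrightarrow> t = F \<circ> inv s"
proof -
  have "s \<circ> inv s = id" "inv s \<circ> s = id"
    using bij_is_surj[OF assms] bij_is_inj[OF assms] by (simp_all add: surj_iff inj_iff)
  then show ?thesis by (metis comp_assoc comp_id)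
qed

lemma polytabloid_comp:
  assumes T: "tableau n la T" and s: "s permutes {..<n}"
  shows "polytabloid n la (s \<circ> T) t = polytabloid n la T (t \<circ> s)"
proof -
  have bij: "bij s" "bij (inv s)" using permutes_bij[OF s] by (auto simp: bij_imp_bij_inv)
  have inj_conj: "inj_on (\<lambda>p. s \<circ> p \<circ> inv s) (col_group n la T)"
  proof (rule inj_onI)
    fix p q assume "s \<circ> p \<circ> inv s = s \<circ> q \<circ> inv s"
    then have "inv s \<circ> (s \<circ> p \<circ> inv s) \<circ> s = inv s \<circ> (s \<circ> q \<circ> inv s) \<circ> s" by simp
    then show "p = q" using permutes_inverses[OF s] by (simp add: fun_eq_iff)
  qed
  have term_eq: "(if t = tabloid_of n la (s \<circ> T) \<circ> inv (s \<circ> p \<circ> inv s) then of_int (sign (s \<circ> p \<circ> inv s)) else 0)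
      = (if t \<circ> s = tabloid_of n la T \<circ> inv p then of_int (sign p) else (0::complex))"
    if p: "p \<in> col_group n la T" for p
  proof -
    have p: "p permutes {..<n}" using p by (simp add: col_group_def)
    have "inv (s \<circ> p \<circ> inv s) = s \<circ> inv p \<circ> inv s"
      using bij permutes_bij[OF p] by (simp add: o_inv_distrib bij_comp inv_inv_eq o_assoc)
    then have "tabloid_of n la (s \<circ> T) \<circ> inv (s \<circ> p \<circ> inv s) = tabloid_of n la T \<circ> inv p \<circ> inv s"
      unfolding tabloid_of_comp[OF T s] using permutes_inverses[OF s] by (simp add: fun_eq_iff)
    moreover have "sign (s \<circ> p \<circ> inv s) = sign p"
      using s p by (intro sign_conjugate) (auto simp: permutation_permutes)
    ultimately show ?thesis by (simp add: comp_bij_eq_iff[OF bij(1)])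
  qed
  have "(\<Sum>q\<in>(\<lambda>p. s \<circ> p \<circ> inv s) ` col_group n la T.
      if t = tabloid_of n la (s \<circ> T) \<circ> inv q then of_int (sign q) else (0::complex)) =
      (\<Sum>p\<in>col_group n la T. if t \<circ> s = tabloid_of n la T \<circ> inv p then of_int (sign p) else 0)"
    by (rule sum.reindex_cong[OF inj_conj refl]) (erule term_eq)
  then show ?thesis by (simp add: polytabloid_def col_group_comp[OF T s])
qed

lemma polytabloid_tabloid_of:
  assumes T: "tableau n la T"
  shows "polytabloid n la T (tabloid_of n la T) = 1"
proof -
  have idc: "id \<in> col_group n la T" by (simp add: col_group_def)
  have only: "p = id" if p: "p \<in> col_group n la T" "tabloid_of n la T = tabloid_of n la T \<circ> inv p" for p
  proof -
    have pp: "p permutes {..<n}" and pc: "\<forall>i<n. snd (cell_of la T (p i)) = snd (cell_of la T i)"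
      using p(1) by (auto simp: col_group_def)
    have ipp: "inv p permutes {..<n}" using permutes_inv[OF pp] .
    have "inv p i = i" for i
    proof (cases "i < n")
      case True
      have qn: "inv p i < n" using ipp True by (metis lessThan_iff permutes_in_image)
      have f: "fst (cell_of la T i) = fst (cell_of la T (inv p i))"
        using fun_cong[OF p(2), of i] True qn by (simp add: tabloid_of_def)
      have "snd (cell_of la T (p (inv p i))) = snd (cell_of la T (inv p i))" using pc qn by blast
      then have "snd (cell_of la T i) = snd (cell_of la T (inv p i))"
        using permutes_inverses(1)[OF pp] by simp
      then have "cell_of la T i = cell_of la T (inv p i)" using f by (simp add: prod_eq_iff)
      then show ?thesis using cell_of_inj[OF T True qn] by simp
    next
      case False then show ?thesis using ipp by (simp add: permutes_not_in)
    qed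
    then have "inv p = id" by (simp add: fun_eq_iff)
    then show "p = id" using pp by (metis inv_id inv_inv_eq permutes_bij)
  qed
  have "polytabloid n la T (tabloid_of n la T) =
      (\<Sum>p\<in>col_group n la T. if p = id then of_int (sign p) else 0)"
    unfolding polytabloid_def by (rule sum.cong[OF refl]) (use only in auto)
  also have "\<dots> = 1"
  proof -
    have "col_group n la T \<subseteq> {p. p permutes {..<n}}" by (auto simp: col_group_def)
    then have "finite (col_group n la T)" using finite_permutations[of "{..<n}"] finite_subset by blast
    then show ?thesis using idc by (simp add: sum.delta')
  qed
  finally show ?thesis .
qed

section \<open>Irreducibles occurring in R(Z)_d\<close>

lemma cspan_zero: "(\<lambda>_. 0) \<in> cspan S"
  unfolding cspan_def by (intro CollectI exI[of _ "{}"]) auto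

lemma cspan_base: "g \<in> S \<Longrightarrow> g \<in> cspan S"
  unfolding cspan_def by (intro CollectI exI[of _ "{g}"] exI[of _ "\<lambda>_. 1"]) auto

lemma cspan_lincomb:
  assumes "x \<in> cspan S" "y \<in> cspan S"
  shows "(\<lambda>z. a * x z + b * y z) \<in> cspan S"
proof -
  obtain F1 c1 where h1: "finite F1" "F1 \<subseteq> S" "x = (\<lambda>z. \<Sum>g\<in>F1. c1 g * g z)"
    using assms(1) unfolding cspan_def by blast
  obtain F2 c2 where h2: "finite F2" "F2 \<subseteq> S" "y = (\<lambda>z. \<Sum>g\<in>F2. c2 g * g z)"
    using assms(2) unfolding cspan_def by blast
  let ?c = "\<lambda>g. a * (if g \<in> F1 then c1 g else 0) + b * (if g \<in> F2 then c2 g else 0)"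
  have "a * x z + b * y z = (\<Sum>g\<in>F1\<union>F2. ?c g * g z)" for z
  proof -
    have "(\<Sum>g\<in>F1\<union>F2. (if g \<in> F1 then c1 g else 0) * g z) = (\<Sum>g\<in>F1. c1 g * g z)"
      "(\<Sum>g\<in>F1\<union>F2. (if g \<in> F2 then c2 g else 0) * g z) = (\<Sum>g\<in>F2. c2 g * g z)"
      using h1(1) h2(1) by (intro sum.mono_neutral_cong_right; auto)+
    moreover have "(\<Sum>g\<in>F1\<union>F2. ?c g * g z) =
        a * (\<Sum>g\<in>F1\<union>F2. (if g \<in> F1 then c1 g else 0) * g z)
        + b * (\<Sum>g\<in>F1\<union>F2. (if g \<in> F2 then c2 g else 0) * g z)"
      by (simp add: distrib_right sum.distrib sum_distrib_left mult.assoc)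
    ultimately show ?thesis using h1(3) h2(3) by simp
  qed
  with h1 h2 show ?thesis
    unfolding cspan_def by (intro CollectI exI[of _ "F1 \<union> F2"] exI[of _ ?c]) auto
qed

lemma smult_one [simp]: "smult 1 p = p"
  by (rule poly_mapping_eqI) (simp add: smult_def map.rep_eq when_def)

lemma smult_zero [simp]: "smult 0 p = 0"
  by (rule poly_mapping_eqI) (simp add: smult_def map.rep_eq when_def)

lemma linear_on_cspan_sum:
  assumes lin: "\<forall>x\<in>cspan G. \<forall>y\<in>cspan G. \<forall>a b.
      phi (\<lambda>z. a * x z + b * y z) = smult a (phi x) + smult b (phi y)"
    and I: "finite I" and w: "\<And>i. i \<in> I \<Longrightarrow> w i \<in> cspan G"
  shows "(\<lambda>z. \<Sum>i\<in>I. w i z) \<in> cspan G \<and> phi (\<lambda>z. \<Sum>i\<in>I. w i z) = (\<Sum>i\<in>I. phi (w i))"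
  using I w
proof (induction I rule: finite_induct)
  case empty
  have zero: "(\<lambda>_. 0) \<in> cspan G" by (rule cspan_zero)
  from zero spec[OF spec[OF bspec[OF bspec[OF lin zero] zero]], of 0 0] show ?case by simp
next
  case (insert x I)
  then have IH: "(\<lambda>z. \<Sum>i\<in>I. w i z) \<in> cspan G" "phi (\<lambda>z. \<Sum>i\<in>I. w i z) = (\<Sum>i\<in>I. phi (w i))"
    and wx: "w x \<in> cspan G" by auto
  have "(\<lambda>z. 1 * w x z + 1 * (\<lambda>z. \<Sum>i\<in>I. w i z) z) \<in> cspan G"
    using cspan_lincomb[OF wx IH(1), of 1 1] by simp
  moreover note spec[OF spec[OF bspec[OF bspec[OF lin wx] IH(1)]], of 1 1]
  ultimately show ?case using insert IH by simp
qed

lemma polytabloid_pair_in_specht_pair: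
  "tableau n la T \<Longrightarrow> tableau m mu U \<Longrightarrow>
     (\<lambda>(t, u). polytabloid n la T t * polytabloid m mu U u) \<in> specht_pair n m la mu"
  unfolding specht_pair_def by (rule cspan_base) blast

lemma wact_polytabloid_pair:
  assumes "tableau n la T" "tableau m mu U" "g permutes {..<n}" "h permutes {..<m}"
  shows "wact g h (\<lambda>(t, u). polytabloid n la T t * polytabloid m mu U u) =
    (\<lambda>(t, u). polytabloid n la (g \<circ> T) t * polytabloid m mu (h \<circ> U) u)"
  using polytabloid_comp[OF assms(1,3)] polytabloid_comp[OF assms(2,4)]
  by (simp add: wact_def fun_eq_iff)

text \<open>By equivariance of the lift, the symmetrized vector is sent into (gr I(Z))_d, so it
  vanishes by injectivity.\<close>

lemma occurs_in_R_symmetrized_polytabloids_eq_0: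
  assumes occ: "occurs_in_R n m Z d la mu" and T: "tableau n la T" and U: "tableau m mu U"
    and I: "finite I" and perm: "\<And>i. i \<in> I \<Longrightarrow> g i permutes {..<n} \<and> h i permutes {..<m}"
    and kill: "\<And>f. f \<in> homog n m d \<Longrightarrow> (\<Sum>i\<in>I. pact (g i) (h i) f) \<in> gr_homog_part n m Z d"
  shows "(\<Sum>i\<in>I. polytabloid n la (g i \<circ> T) t * polytabloid m mu (h i \<circ> U) u) = 0"
proof -
  let ?W = "specht_pair n m la mu"
  let ?J = "gr_homog_part n m Z d"
  let ?e = "\<lambda>T U. \<lambda>(t, u). polytabloid n la T t * polytabloid m mu U u"
  obtain phi where homog: "\<forall>w\<in>?W. phi w \<in> homog n m d"
    and lin: "\<forall>x\<in>?W. \<forall>y\<in>?W. \<forall>a b. phi (\<lambda>z. a * x z + b * y z) = smult a (phi x) + smult b (phi y)"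
    and equiv: "\<forall>g h. g permutes {..<n} \<and> h permutes {..<m} \<longrightarrow>
      (\<forall>w\<in>?W. phi (wact g h w) - pact g h (phi w) \<in> ?J)"
    and inj: "\<forall>w\<in>?W. phi w \<in> ?J \<longrightarrow> w = (\<lambda>_. 0)"
    using occ unfolding occurs_in_R_def Let_def gr_homog_part_def[symmetric] by blast
  have e: "?e T U \<in> ?W" by (rule polytabloid_pair_in_specht_pair[OF T U])
  have w: "wact (g i) (h i) (?e T U) = ?e (g i \<circ> T) (h i \<circ> U)" if "i \<in> I" for i
    using perm[OF that] by (intro wact_polytabloid_pair[OF T U]) auto
  define ws where "ws = (\<lambda>z. \<Sum>i\<in>I. ?e (g i \<circ> T) (h i \<circ> U) z)"
  have "?e (g i \<circ> T) (h i \<circ> U) \<in> ?W" if "i \<in> I" for i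
    using perm[OF that] tableau_comp T U by (intro polytabloid_pair_in_specht_pair) auto
  then have "ws \<in> ?W \<and> phi ws = (\<Sum>i\<in>I. phi (?e (g i \<circ> T) (h i \<circ> U)))"
    unfolding ws_def specht_pair_def by (rule linear_on_cspan_sum[OF lin[unfolded specht_pair_def] I])
  then have ws: "ws \<in> ?W" and phi_ws: "phi ws = (\<Sum>i\<in>I. phi (?e (g i \<circ> T) (h i \<circ> U)))"
    by auto
  have "phi ws = (\<Sum>i\<in>I. phi (wact (g i) (h i) (?e T U)) - pact (g i) (h i) (phi (?e T U)))
      + (\<Sum>i\<in>I. pact (g i) (h i) (phi (?e T U)))"
    unfolding phi_ws by (simp add: w sum_subtractf)
  also have "\<dots> \<in> ?J"
  proof (rule gr_homog_part_add)
    show "(\<Sum>i\<in>I. phi (wact (g i) (h i) (?e T U)) - pact (g i) (h i) (phi (?e T U))) \<in> ?J"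
      using equiv perm e by (intro gr_homog_part_sum[OF I]) auto
    show "(\<Sum>i\<in>I. pact (g i) (h i) (phi (?e T U))) \<in> ?J"
      using homog e by (intro kill) auto
  qed
  finally have "ws = (\<lambda>_. 0)" using inj ws by blast
  from fun_cong[OF this, of "(t, u)"] show ?thesis unfolding ws_def by simp
qed

lemma is_partition_hd_le:
  assumes "is_partition n la" "0 < n"
  shows "la \<noteq> []" "hd la \<le> n"
proof -
  show ne: "la \<noteq> []" using assms by (auto simp: is_partition_def)
  show "hd la \<le> n" using assms ne member_le_sum_list[of "hd la" la] by (simp add: is_partition_def)
qed

lemma tableau_first_row_subset:
  assumes T: "tableau n la T" and la: "la \<noteq> []" and k: "k \<le> hd la"
  obtains S where "S \<subseteq> {..<n}" "card S = k" "\<forall>x\<in>S. tabloid_of n la T x = 0"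
proof -
  let ?S = "(\<lambda>j. T (0, j)) ` {..<k}"
  have cells: "(0, j) \<in> young_diagram la" if "j < k" for j
    using that la k by (auto simp: young_diagram_def hd_conv_nth)
  have T_bij: "inj_on T (young_diagram la)" "T ` young_diagram la = {..<n}"
    using T by (auto simp: tableau_def bij_betw_def)
  have "?S \<subseteq> {..<n}" using cells T_bij(2) by blast
  moreover have "card ?S = k"
    using cells T_bij(1) by (subst card_image) (auto simp: inj_on_def)
  moreover have "tabloid_of n la T x = 0" if "x \<in> ?S" for x
    using that cells T_bij(2) cell_of_tableau_cell[OF T] by (auto simp: tabloid_of_def)
  ultimately show ?thesis by (intro that) auto
qed

lemma comp_permutes_eq:
  assumes s: "s permutes S" and const: "\<forall>x\<in>S. t x = c"
  shows "t \<circ> s = t"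
proof
  fix x show "(t \<circ> s) x = t x"
    using const permutes_in_image[OF s] permutes_not_in[OF s] by (cases "x \<in> S") auto
qed

lemma occurs_in_R_rook_placements_hd_la:
  assumes occ: "occurs_in_R n m (rook_placements n m r) d la mu"
    and dr: "d \<le> r" "r \<le> m" and la: "is_partition n la" "0 < n" and mu: "is_partition m mu"
  shows "hd la \<le> n + m - d - r"
proof (rule ccontr)
  assume "\<not> ?thesis"
  then have long_row: "n + m - d - r + 1 \<le> hd la" by simp
  obtain T where T: "tableau n la T" using tableau_exists[OF la(1)] by blast
  obtain U where U: "tableau m mu U" using tableau_exists[OF mu] by blast
  have "la \<noteq> []" "hd la \<le> n" using is_partition_hd_le[OF la] by auto
  with long_row dr have d: "1 \<le> d" by linarith
  obtain S where S: "S \<subseteq> {..<n}" "card S = n + m - d - r + 1"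
    and row_0: "\<forall>x\<in>S. tabloid_of n la T x = 0"
    using tableau_first_row_subset[OF T \<open>la \<noteq> []\<close> long_row] by blast
  let ?P = "{s. s permutes S}"
  have fin_P: "finite ?P" using S(1) finite_subset finite_permutations by blast
  have perm: "s permutes {..<n} \<and> id permutes {..<m}" if "s \<in> ?P" for s
    using that S(1) permutes_subset permutes_id by blast
  have "(\<Sum>s\<in>?P. pact s id f) \<in> gr_homog_part n m (rook_placements n m r) d"
    if "f \<in> homog n m d" for f
  proof (rule sum_pact_in_gr_homog_part[where g = "\<lambda>s. s" and h = "\<lambda>_. id", OF fin_P _ d that])
    fix a assume "mono_within n m a" "mdeg a = d"
    from low_degree_on_row_symmetrized_mono[OF subset_refl S dr this]
    show "low_degree_on (rook_placements n m r) n m (d - 1)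
        (\<lambda>A. \<Sum>s\<in>?P. mono_eval (\<lambda>x y. A (s x) (id y)) a)" by simp
  qed (use perm in blast)
  from occurs_in_R_symmetrized_polytabloids_eq_0[OF occ T U fin_P perm this]
  have "(\<Sum>s\<in>?P. polytabloid n la (s \<circ> T) (tabloid_of n la T) *
      polytabloid m mu (id \<circ> U) (tabloid_of m mu U)) = 0" .
  moreover have "polytabloid n la (s \<circ> T) (tabloid_of n la T) = 1" if "s \<in> ?P" for s
  proof -
    have "tabloid_of n la T \<circ> s = tabloid_of n la T"
      using that row_0 by (intro comp_permutes_eq) auto
    with perm[OF that] polytabloid_tabloid_of[OF T] show ?thesis
      by (simp add: polytabloid_comp[OF T])
  qed
  ultimately have "card ?P = 0" using polytabloid_tabloid_of[OF U] by simp
  with S(1) show False using card_permutations[OF refl, of S] finite_subset by fastforce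
qed

lemma occurs_in_R_rook_placements_hd_mu:
  assumes occ: "occurs_in_R n m (rook_placements n m r) d la mu"
    and dr: "d \<le> r" "r \<le> n" and la: "is_partition n la" and mu: "is_partition m mu" "0 < m"
  shows "hd mu \<le> n + m - d - r"
proof (rule ccontr)
  assume "\<not> ?thesis"
  then have long_row: "n + m - d - r + 1 \<le> hd mu" by simp
  obtain T where T: "tableau n la T" using tableau_exists[OF la] by blast
  obtain U where U: "tableau m mu U" using tableau_exists[OF mu(1)] by blast
  have "mu \<noteq> []" "hd mu \<le> m" using is_partition_hd_le[OF mu] by auto
  with long_row dr have d: "1 \<le> d" by linarith
  obtain S where S: "S \<subseteq> {..<m}" "card S = n + m - d - r + 1"
    and row_0: "\<forall>x\<in>S. tabloid_of m mu U x = 0"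
    using tableau_first_row_subset[OF U \<open>mu \<noteq> []\<close> long_row] by blast
  let ?P = "{s. s permutes S}"
  have fin_P: "finite ?P" using S(1) finite_subset finite_permutations by blast
  have perm: "id permutes {..<n} \<and> s permutes {..<m}" if "s \<in> ?P" for s
    using that S(1) permutes_subset permutes_id by blast
  have "(\<Sum>s\<in>?P. pact id s f) \<in> gr_homog_part n m (rook_placements n m r) d"
    if "f \<in> homog n m d" for f
  proof (rule sum_pact_in_gr_homog_part[where g = "\<lambda>_. id" and h = "\<lambda>s. s", OF fin_P _ d that])
    fix a assume "mono_within n m a" "mdeg a = d"
    from low_degree_on_col_symmetrized_mono[OF subset_refl S dr this]
    show "low_degree_on (rook_placements n m r) n m (d - 1)
        (\<lambda>A. \<Sum>s\<in>?P. mono_eval (\<lambda>x y. A (id x) (s y)) a)" by simp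
  qed (use perm in blast)
  from occurs_in_R_symmetrized_polytabloids_eq_0[OF occ T U fin_P perm this]
  have "(\<Sum>s\<in>?P. polytabloid n la (id \<circ> T) (tabloid_of n la T) *
      polytabloid m mu (s \<circ> U) (tabloid_of m mu U)) = 0" .
  moreover have "polytabloid m mu (s \<circ> U) (tabloid_of m mu U) = 1" if "s \<in> ?P" for s
  proof -
    have "tabloid_of m mu U \<circ> s = tabloid_of m mu U"
      using that row_0 by (intro comp_permutes_eq) auto
    with perm[OF that] polytabloid_tabloid_of[OF U] show ?thesis
      by (simp add: polytabloid_comp[OF U])
  qed
  ultimately have "card ?P = 0" using polytabloid_tabloid_of[OF T] by simp
  with S(1) show False using card_permutations[OF refl, of S] finite_subset by fastforce
qed

theorem mainTheorem8:
  fixes n m r d :: nat and la mu :: "nat list"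
  assumes "0 < n" and "0 < m"
    and "d \<le> r" and "r \<le> min n m"
    and "is_partition n la" and "is_partition m mu"
    and "occurs_in_R n m (rook_placements n m r) d la mu"
  shows "hd la \<le> n + m - d - r \<and> hd mu \<le> n + m - d - r"
  using occurs_in_R_rook_placements_hd_la[of n m r d la mu]
    occurs_in_R_rook_placements_hd_mu[of n m r d la mu] assms
  by simp

end
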